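(* For every $T>0$, the control operator $W^T:\mathcal F^T\to L_2(-T,T)$, $W^TF:=u^F(\cdot,T)$, is a bounded linear bijection with bounded inverse. In particular the reachable set $U^T:=\{u^F(\cdot,T):F\in\mathcal F^T\}$ equals $L_2(-T,T)$.
   Context: Let $q\in C^2(\mathbb R)\cap L_1(\mathbb R)$ be real-valued. Let $w_1,w_2$ be real functions on $\{(x,t):|x|\le t\}$, continuous on each closed wedge $\{0\le x\le t\}$ and $\{-t\le x\le0\}$ (they are the kernels of the representation formula for the wave equation $u_{tt}-u_{xx}+q(x)u=0$, $x\ne0$, with transmission control at $x=0$; only their continuity matters here). Let $\mathcal F^T:=L_2(0,T;\mathbb R^2)$. For $F=(f_1,f_2)^\top\in\mathcal F^T$, $u^F(\cdot,T)\in L_2(-T,T)$ is defined by $u^F(x,T)=\tfrac12 f_1(T-x)-\tfrac12 f_2(T-x)+\int_x^T(w_1(x,s)f_1(T-s)+w_2(x,s)f_2(T-s))ds$ for $0<x<T$, and $u^F(x,T)=-\tfrac12 f_1(T+x)-\tfrac12 f_2(T+x)+\int_{-x}^T(w_1(x,s)f_1(T-s)+w_2(x,s)f_2(T-s))ds$ for $-T<x<0$. *)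

theory Defs
  imports "HOL-Analysis.Analysis"
begin

definition sq_int :: "real set \<Rightarrow> (real \<Rightarrow> real) \<Rightarrow> bool" where
  "sq_int S f \<longleftrightarrow> set_borel_measurable lborel S f \<and>
      set_integrable lborel S (\<lambda>x. (f x)\<^sup>2)"

definition l2_norm :: "real set \<Rightarrow> (real \<Rightarrow> real) \<Rightarrow> real" where
  "l2_norm S f = sqrt (LINT x:S|lborel. (f x)\<^sup>2)"

definition ctrl_space :: "real \<Rightarrow> ((real \<Rightarrow> real) \<times> (real \<Rightarrow> real)) set" where
  "ctrl_space T = {F. sq_int {0<..<T} (fst F) \<and> sq_int {0<..<T} (snd F)}"

definition ctrl_norm :: "real \<Rightarrow> (real \<Rightarrow> real) \<times> (real \<Rightarrow> real) \<Rightarrow> real" where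
  "ctrl_norm T F = sqrt (LINT t:{0<..<T}|lborel. (fst F t)\<^sup>2 + (snd F t)\<^sup>2)"

text \<open>The kernels w1, w2 are given separately on the right wedge {0 \<le> x \<le> t}
  (w1p, w2p) and on the left wedge {-t \<le> x \<le> 0} (w1m, w2m), since they may
  have different (one-sided) values on the line x = 0.
  The control operator W^T F = u^F(.,T), as a function on (-T,T) (value 0 elsewhere).\<close>
definition uF :: "(real \<Rightarrow> real \<Rightarrow> real) \<Rightarrow> (real \<Rightarrow> real \<Rightarrow> real) \<Rightarrow>
    (real \<Rightarrow> real \<Rightarrow> real) \<Rightarrow> (real \<Rightarrow> real \<Rightarrow> real) \<Rightarrow>
    real \<Rightarrow> (real \<Rightarrow> real) \<times> (real \<Rightarrow> real) \<Rightarrow> real \<Rightarrow> real" where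
  "uF w1p w2p w1m w2m T F x =
     (if 0 < x \<and> x < T then
        (1/2) * fst F (T - x) - (1/2) * snd F (T - x)
        + (LINT s:{x..T}|lborel. w1p x s * fst F (T - s) + w2p x s * snd F (T - s))
      else if -T < x \<and> x < 0 then
        -(1/2) * fst F (T + x) - (1/2) * snd F (T + x)
        + (LINT s:{-x..T}|lborel. w1m x s * fst F (T - s) + w2m x s * snd F (T - s))
      else 0)"

end

theory Submission
  imports Defs
begin

text \<open>In the variables \<open>\<tau> = T - \<bar>x\<bar>\<close> the representation formula expresses the state at
  the mirror points \<open>\<plusminus>(T - \<tau>)\<close> through the time-reversed controls \<open>p, q\<close> on \<open>(0,T)\<close>:
  as \<open>(p - q)/2 + A(p,q)\<close> on the right and \<open>-(p + q)/2 + B(p,q)\<close> on the left, where \<open>A, B\<close> are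
  Volterra operators whose kernels are bounded because \<open>w\<^sub>1, w\<^sub>2\<close> are continuous on compact
  triangles. Boundedness of \<open>W\<^sup>T\<close> follows by Cauchy-Schwarz. Taking the difference and the
  sum of the state at the two mirror points turns \<open>W\<^sup>T F = g\<close> into a Volterra system of the
  second kind \<open>(p, q) = h + K (p, q)\<close>, where \<open>h\<close> depends only on \<open>g\<close>, with \<open>\<parallel>h\<parallel> \<le> 2\<parallel>g\<parallel>\<close>.
  The \<open>n\<close>-th iterate of \<open>K\<close> is bounded by \<open>(2MT)\<^sup>n/n!\<close>, so the Neumann series solves the
  system uniquely and boundedly in \<open>h\<close>; this gives injectivity, surjectivity and the bounded
  inverse.\<close>

section \<open>Volterra operators with bounded kernels\<close>

definition volterra_kernel :: "real \<Rightarrow> real \<Rightarrow> (real \<Rightarrow> real \<Rightarrow> real) \<Rightarrow> bool" where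
  "volterra_kernel T M k \<longleftrightarrow> (\<lambda>z. k (fst z) (snd z)) \<in> borel_measurable borel
     \<and> (\<forall>t s. \<bar>k t s\<bar> \<le> M) \<and> (\<forall>t s. k t s \<noteq> 0 \<longrightarrow> 0 \<le> s \<and> s \<le> t \<and> t \<le> T)"

text \<open>One row \<open>(k l)\<close> of a \<open>2 \<times> 2\<close> matrix Volterra operator, applied to the pair \<open>(p, q)\<close>.\<close>

definition volterra ::
    "(real \<Rightarrow> real \<Rightarrow> real) \<Rightarrow> (real \<Rightarrow> real \<Rightarrow> real) \<Rightarrow> (real \<Rightarrow> real) \<Rightarrow> (real \<Rightarrow> real) \<Rightarrow> real \<Rightarrow> real"
  where "volterra k l p q t = (\<integral>s. k t s * p s + l t s * q s \<partial>lborel)"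

lemma integrable_indicator_Icc: "integrable lborel (indicator {a..b::real} :: real \<Rightarrow> real)"
  by (rule integrable_real_indicator) (auto simp: emeasure_lborel_Icc_eq)

lemma integrable_indicator_Ioo: "integrable lborel (indicator {a<..<b::real} :: real \<Rightarrow> real)"
proof (cases "a \<le> b")
  case True then show ?thesis by (intro integrable_real_indicator) (simp_all add: emeasure_lborel_Ioo)
qed simp

lemma integrable_indicator_mult:
  fixes f :: "real \<Rightarrow> real"
  shows "integrable lborel f \<Longrightarrow> A \<in> sets borel \<Longrightarrow> integrable lborel (\<lambda>x. indicator A x * f x)"
  using integrable_mult_indicator[of A lborel f] by simp

lemma volterra_kernel_nonneg_bound: "volterra_kernel T M k \<Longrightarrow> 0 \<le> M"
  unfolding volterra_kernel_def by (meson abs_ge_zero order_trans)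

lemma volterra_kernel_abs_le: "volterra_kernel T M k \<Longrightarrow> \<bar>k t s\<bar> \<le> M"
  unfolding volterra_kernel_def by blast

lemma volterra_kernel_outside:
  "volterra_kernel T M k \<Longrightarrow> \<not> (0 \<le> s \<and> s \<le> t \<and> t \<le> T) \<Longrightarrow> k t s = 0"
  unfolding volterra_kernel_def by blast

lemma volterra_kernel_abs_le_indicator: "volterra_kernel T M k \<Longrightarrow> \<bar>k t s\<bar> \<le> M * indicator {0..t} s"
  using volterra_kernel_abs_le[of T M k t s] volterra_kernel_outside[of T M k s t]
  by (auto simp: indicator_def)

lemma volterra_kernel_mono:
  assumes "volterra_kernel T B k" "B \<le> B'"
  shows "volterra_kernel T B' k"
proof -
  have "\<bar>k t s\<bar> \<le> B'" for t s
    using volterra_kernel_abs_le[OF assms(1), of t s] assms(2) by linarith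
  then show ?thesis using assms(1) unfolding volterra_kernel_def by blast
qed

lemma volterra_kernel_add_scaled:
  assumes k: "volterra_kernel T B k" and l: "volterra_kernel T B' l" and c: "\<bar>c\<bar> \<le> 1"
  shows "volterra_kernel T (B + B') (\<lambda>t s. k t s + c * l t s)"
  unfolding volterra_kernel_def
proof (intro conjI allI impI)
  show "(\<lambda>z. k (fst z) (snd z) + c * l (fst z) (snd z)) \<in> borel_measurable borel"
    using k l unfolding volterra_kernel_def by auto
  have cl: "\<bar>c * l t s\<bar> \<le> B'" for t s
    using volterra_kernel_abs_le[OF l, of t s] c
    by (simp add: abs_mult) (meson abs_ge_zero mult_left_le_one_le order_trans)
  show "\<bar>k t s + c * l t s\<bar> \<le> B + B'" for t s
    using cl[of t s] volterra_kernel_abs_le[OF k, of t s] abs_triangle_ineq[of "k t s" "c * l t s"]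
    by linarith
  fix t s assume "k t s + c * l t s \<noteq> 0"
  then have "k t s \<noteq> 0 \<or> l t s \<noteq> 0" by auto
  then show "0 \<le> s" "s \<le> t" "t \<le> T"
    using volterra_kernel_outside[OF k, of s t] volterra_kernel_outside[OF l, of s t] by auto
qed

lemma volterra_kernel_measurable_section:
  assumes "volterra_kernel T M k"
  shows "k t \<in> borel_measurable lborel"
proof -
  have [measurable]: "(\<lambda>z. k (fst z) (snd z)) \<in> borel_measurable (lborel \<Otimes>\<^sub>M lborel)"
    using assms unfolding volterra_kernel_def lborel_prod by (simp add: measurable_lborel1)
  have "(\<lambda>s. (\<lambda>z. k (fst z) (snd z)) (t, s)) \<in> borel_measurable lborel"
    by measurable
  then show ?thesis by simp
qed

lemma integrable_volterra_kernel_mult: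
  assumes "volterra_kernel T M k" "integrable lborel p"
  shows "integrable lborel (\<lambda>s. k t s * p s)"
proof (rule Bochner_Integration.integrable_bound[of lborel "\<lambda>s. M * p s"])
  show "integrable lborel (\<lambda>s. M * p s)" using assms(2) by simp
  show "(\<lambda>s. k t s * p s) \<in> borel_measurable lborel"
    using volterra_kernel_measurable_section[OF assms(1)] assms(2) by measurable
  show "AE x in lborel. norm (k t x * p x) \<le> norm (M * p x)"
    using volterra_kernel_abs_le[OF assms(1)] volterra_kernel_nonneg_bound[OF assms(1)]
    by (auto simp: abs_mult intro!: mult_right_mono)
qed

lemma borel_measurable_volterra:
  assumes k: "volterra_kernel T M k" and l: "volterra_kernel T M l"
    and [measurable]: "p \<in> borel_measurable lborel" "q \<in> borel_measurable lborel"
  shows "volterra k l p q \<in> borel_measurable lborel"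
proof -
  have [measurable]: "(\<lambda>z. k (fst z) (snd z)) \<in> borel_measurable (lborel \<Otimes>\<^sub>M lborel)"
      "(\<lambda>z. l (fst z) (snd z)) \<in> borel_measurable (lborel \<Otimes>\<^sub>M lborel)"
    using k l unfolding volterra_kernel_def lborel_prod by (simp_all add: measurable_lborel1)
  have "(\<lambda>(t, s). k t s * p s + l t s * q s) \<in> borel_measurable (lborel \<Otimes>\<^sub>M lborel)"
    by (simp add: case_prod_beta')
  then show ?thesis unfolding volterra_def[abs_def]
    by (rule lborel.borel_measurable_lebesgue_integral)
qed

lemma volterra_outside:
  assumes "volterra_kernel T M k" "volterra_kernel T M l" "t \<notin> {0..T}"
  shows "volterra k l p q t = 0"
proof -
  have "k t s = 0" "l t s = 0" for s
    using volterra_kernel_outside[OF assms(1)] volterra_kernel_outside[OF assms(2)] assms(3) by auto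
  then show ?thesis by (simp add: volterra_def)
qed

lemma integral_indicator_mult_le:
  fixes f :: "real \<Rightarrow> real"
  assumes "integrable lborel f" "\<And>x. 0 \<le> f x"
  shows "(\<integral>s. indicator A s * f s \<partial>lborel) \<le> (\<integral>s. f s \<partial>lborel)"
  by (rule integral_mono'[OF assms(1)]) (use assms(2) in \<open>auto simp: indicator_def\<close>)

lemma abs_volterra_le:
  assumes "volterra_kernel T M k" "volterra_kernel T M l" "integrable lborel p" "integrable lborel q"
  shows "\<bar>volterra k l p q t\<bar> \<le> M * (\<integral>s. indicator {0..t} s * (\<bar>p s\<bar> + \<bar>q s\<bar>) \<partial>lborel)"
proof -
  have "\<bar>volterra k l p q t\<bar> \<le> (\<integral>s. \<bar>k t s * p s + l t s * q s\<bar> \<partial>lborel)"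
    unfolding volterra_def using integral_norm_bound[of lborel "\<lambda>s. k t s * p s + l t s * q s"] by simp
  also have "\<dots> \<le> (\<integral>s. M * (indicator {0..t} s * (\<bar>p s\<bar> + \<bar>q s\<bar>)) \<partial>lborel)"
  proof (rule integral_mono')
    show "integrable lborel (\<lambda>s. M * (indicator {0..t} s * (\<bar>p s\<bar> + \<bar>q s\<bar>)))"
      using assms(3,4) by (intro integrable_mult_right integrable_indicator_mult) auto
    fix s
    have "\<bar>k t s * p s\<bar> \<le> M * indicator {0..t} s * \<bar>p s\<bar>"
      using volterra_kernel_abs_le_indicator[OF assms(1)] by (simp add: abs_mult mult_right_mono)
    moreover have "\<bar>l t s * q s\<bar> \<le> M * indicator {0..t} s * \<bar>q s\<bar>"
      using volterra_kernel_abs_le_indicator[OF assms(2)] by (simp add: abs_mult mult_right_mono)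
    ultimately show "\<bar>k t s * p s + l t s * q s\<bar> \<le> M * (indicator {0..t} s * (\<bar>p s\<bar> + \<bar>q s\<bar>))"
      by (simp add: algebra_simps)
    show "0 \<le> M * (indicator {0..t} s * (\<bar>p s\<bar> + \<bar>q s\<bar>))"
      using volterra_kernel_nonneg_bound[OF assms(1)] by simp
  qed
  finally show ?thesis by simp
qed

lemma abs_volterra_le_L1:
  assumes "volterra_kernel T M k" "volterra_kernel T M l" "integrable lborel p" "integrable lborel q"
  shows "\<bar>volterra k l p q t\<bar> \<le> M * (\<integral>s. \<bar>p s\<bar> + \<bar>q s\<bar> \<partial>lborel) * indicator {0..T} t"
proof (cases "t \<in> {0..T}")
  case True
  have "(\<integral>s. indicator {0..t} s * (\<bar>p s\<bar> + \<bar>q s\<bar>) \<partial>lborel) \<le> (\<integral>s. \<bar>p s\<bar> + \<bar>q s\<bar> \<partial>lborel)"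
    using assms(3,4) by (intro integral_indicator_mult_le) auto
  then have "\<bar>volterra k l p q t\<bar> \<le> M * (\<integral>s. \<bar>p s\<bar> + \<bar>q s\<bar> \<partial>lborel)"
    using abs_volterra_le[OF assms, of t] volterra_kernel_nonneg_bound[OF assms(1)]
    by (meson mult_left_mono order_trans)
  then show ?thesis using True by simp
qed (use volterra_outside[OF assms(1,2)] in simp)

lemma integrable_volterra:
  assumes "volterra_kernel T M k" "volterra_kernel T M l" "integrable lborel p" "integrable lborel q"
  shows "integrable lborel (volterra k l p q)"
proof (rule Bochner_Integration.integrable_bound)
  let ?c = "M * (\<integral>s. \<bar>p s\<bar> + \<bar>q s\<bar> \<partial>lborel)"
  show "integrable lborel (\<lambda>t. ?c * indicator {0..T} t)"
    by (rule integrable_mult_right[OF integrable_indicator_Icc])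
  show "volterra k l p q \<in> borel_measurable lborel"
    using borel_measurable_volterra assms by blast
  have M: "0 \<le> M" using volterra_kernel_nonneg_bound[OF assms(1)] .
  moreover have "0 \<le> (\<integral>s. \<bar>p s\<bar> + \<bar>q s\<bar> \<partial>lborel)" by (simp add: integral_nonneg_AE)
  ultimately show "AE t in lborel. norm (volterra k l p q t) \<le> norm (?c * indicator {0..T} t)"
    using abs_volterra_le_L1[OF assms] by (simp add: abs_mult)
qed

lemma volterra_cong_AE:
  assumes "volterra_kernel T M k" "volterra_kernel T M l"
    "p \<in> borel_measurable lborel" "q \<in> borel_measurable lborel"
    "p' \<in> borel_measurable lborel" "q' \<in> borel_measurable lborel"
    "AE s in lborel. p s = p' s" "AE s in lborel. q s = q' s"
  shows "volterra k l p q t = volterra k l p' q' t"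
  unfolding volterra_def
proof (rule integral_cong_AE)
  show "(\<lambda>s. k t s * p s + l t s * q s) \<in> borel_measurable lborel"
    "(\<lambda>s. k t s * p' s + l t s * q' s) \<in> borel_measurable lborel"
    using volterra_kernel_measurable_section[OF assms(1)] volterra_kernel_measurable_section[OF assms(2)]
      assms(3-6) by measurable
  show "AE s in lborel. k t s * p s + l t s * q s = k t s * p' s + l t s * q' s"
    using assms(7,8) by eventually_elim simp
qed

lemma volterra_lincomb:
  assumes "volterra_kernel T M k" "volterra_kernel T M l" "integrable lborel p" "integrable lborel q"
    "integrable lborel p'" "integrable lborel q'"
  shows "volterra k l (\<lambda>s. a * p s + b * p' s) (\<lambda>s. a * q s + b * q' s) t
    = a * volterra k l p q t + b * volterra k l p' q' t"
proof -
  have "volterra k l (\<lambda>s. a * p s + b * p' s) (\<lambda>s. a * q s + b * q' s) t =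
    (\<integral>s. a * (k t s * p s + l t s * q s) + b * (k t s * p' s + l t s * q' s) \<partial>lborel)"
    unfolding volterra_def by (rule Bochner_Integration.integral_cong) (auto simp: algebra_simps)
  also have "\<dots> = a * volterra k l p q t + b * volterra k l p' q' t"
    using integrable_volterra_kernel_mult[OF assms(1)] integrable_volterra_kernel_mult[OF assms(2)]
      assms(3-6) by (simp add: volterra_def)
  finally show ?thesis .
qed

lemma volterra_add_scaled_kernels:
  assumes "volterra_kernel T B k" "volterra_kernel T B' k'" "volterra_kernel T B l"
    "volterra_kernel T B' l'" "integrable lborel p" "integrable lborel q"
  shows "volterra (\<lambda>t s. k t s + c * k' t s) (\<lambda>t s. l t s + c * l' t s) p q t
    = volterra k l p q t + c * volterra k' l' p q t"
proof -
  have "volterra (\<lambda>t s. k t s + c * k' t s) (\<lambda>t s. l t s + c * l' t s) p q t =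
    (\<integral>s. (k t s * p s + l t s * q s) + c * (k' t s * p s + l' t s * q s) \<partial>lborel)"
    unfolding volterra_def by (rule Bochner_Integration.integral_cong) (simp_all add: algebra_simps)
  also have "\<dots> = volterra k l p q t + c * volterra k' l' p q t"
    using integrable_volterra_kernel_mult[OF assms(1)] integrable_volterra_kernel_mult[OF assms(2)]
      integrable_volterra_kernel_mult[OF assms(3)] integrable_volterra_kernel_mult[OF assms(4)]
      assms(5,6) by (simp add: volterra_def)
  finally show ?thesis .
qed

lemma volterra_suminf:
  assumes k: "volterra_kernel T M k" and l: "volterra_kernel T M l"
    and u: "\<And>n. integrable lborel (u n)" and v: "\<And>n. integrable lborel (v n)"
    and bound: "\<And>n s. \<bar>u n s\<bar> + \<bar>v n s\<bar> \<le> b n * indicator {0..T} s"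
    and b_nonneg: "\<And>n. 0 \<le> b n" and b: "summable b"
  shows "volterra k l (\<lambda>s. \<Sum>n. u n s) (\<lambda>s. \<Sum>n. v n s) t = (\<Sum>n. volterra k l (u n) (v n) t)"
proof -
  let ?f = "\<lambda>n s. k t s * u n s + l t s * v n s"
  let ?g = "\<lambda>n s. M * b n * indicator {0..T} s :: real"
  have M: "0 \<le> M" using volterra_kernel_nonneg_bound[OF k] .
  have "norm (u n s) \<le> b n * indicator {0..T} s" "norm (v n s) \<le> b n * indicator {0..T} s" for n s
    using bound[of n s] abs_ge_zero[of "u n s"] abs_ge_zero[of "v n s"] by simp_all
  then have "summable (\<lambda>n. u n s)" "summable (\<lambda>n. v n s)" for s
    by (blast intro: summable_comparison_test'[OF summable_mult2[OF b]])+
  then have sum_eq: "k t s * (\<Sum>n. u n s) + l t s * (\<Sum>n. v n s) = (\<Sum>n. ?f n s)" for s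
    by (simp add: suminf_mult[symmetric] suminf_add)
  have f_le: "\<bar>?f n s\<bar> \<le> ?g n s" for n s
  proof -
    have "\<bar>?f n s\<bar> \<le> \<bar>k t s\<bar> * \<bar>u n s\<bar> + \<bar>l t s\<bar> * \<bar>v n s\<bar>"
      by (metis abs_mult abs_triangle_ineq)
    also have "\<dots> \<le> M * (\<bar>u n s\<bar> + \<bar>v n s\<bar>)"
      using volterra_kernel_abs_le[OF k] volterra_kernel_abs_le[OF l]
      by (simp add: distrib_left add_mono mult_right_mono)
    also have "\<dots> \<le> ?g n s" using mult_left_mono[OF bound M] by (simp add: mult.assoc)
    finally show ?thesis .
  qed
  have "(\<integral>s. (\<Sum>n. ?f n s) \<partial>lborel) = (\<Sum>n. \<integral>s. ?f n s \<partial>lborel)"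
  proof (rule integral_suminf)
    show "integrable lborel (?f n)" for n
      using integrable_volterra_kernel_mult[OF k u] integrable_volterra_kernel_mult[OF l v] by simp
    show "AE s in lborel. summable (\<lambda>n. norm (?f n s))"
    proof (rule AE_I2)
      fix s
      show "summable (\<lambda>n. norm (?f n s))"
        by (rule summable_comparison_test'[OF summable_mult2[OF summable_mult[OF b]], of 0])
          (use f_le in simp)
    qed
    have "(\<integral>s. norm (?f n s) \<partial>lborel) \<le> M * b n * (\<integral>s. indicator {0..T} s \<partial>lborel)" for n
    proof -
      have "(\<integral>s. norm (?f n s) \<partial>lborel) \<le> (\<integral>s. ?g n s \<partial>lborel)"
        using f_le M b_nonneg by (intro integral_mono') (auto intro: integrable_indicator_Icc)
      then show ?thesis by simp
    qed
    then show "summable (\<lambda>n. \<integral>s. norm (?f n s) \<partial>lborel)"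
      by (intro summable_comparison_test'[OF summable_mult2[OF summable_mult[OF b]], of 0])
        (simp add: integral_nonneg_AE)
  qed
  then show ?thesis by (simp add: volterra_def sum_eq)
qed

section \<open>Square integrability on an interval\<close>

lemma abs_le_1_plus_square: "\<bar>y::real\<bar> \<le> 1 + y\<^sup>2"
proof -
  have "0 \<le> (\<bar>y\<bar> - 1/2)\<^sup>2 + 3/4" by simp
  also have "\<dots> = 1 + y\<^sup>2 - \<bar>y\<bar>"
    by (simp add: power2_eq_square algebra_simps abs_mult_self_eq)
  finally show ?thesis by simp
qed

lemma square_half_sum_add_le: "((u + v) / 2 + w)\<^sup>2 \<le> u\<^sup>2 + v\<^sup>2 + 2 * w\<^sup>2" for u v w :: real
proof -
  have "u\<^sup>2 + v\<^sup>2 + 2 * w\<^sup>2 - ((u + v) / 2 + w)\<^sup>2 = (u - v)\<^sup>2 / 2 + ((u + v) / 2 - w)\<^sup>2"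
    by (simp add: power2_eq_square field_simps)
  moreover have "0 \<le> (u - v)\<^sup>2 / 2 + ((u + v) / 2 - w)\<^sup>2" by simp
  ultimately show ?thesis by linarith
qed

lemma square_integrable_imp_integrable_Ioo:
  fixes u :: "real \<Rightarrow> real"
  assumes "u \<in> borel_measurable lborel" "integrable lborel (\<lambda>x. (u x)\<^sup>2)"
    and "\<And>x. x \<notin> {a<..<b} \<Longrightarrow> u x = 0"
  shows "integrable lborel u"
proof (rule Bochner_Integration.integrable_bound)
  show "integrable lborel (\<lambda>x. indicator {a<..<b} x + (u x)\<^sup>2)"
    using assms(2) integrable_indicator_Ioo by simp
  show "AE x in lborel. norm (u x) \<le> norm (indicator {a<..<b} x + (u x)\<^sup>2)"
    using abs_le_1_plus_square assms(3) by (intro AE_I2) (auto simp: indicator_def)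
qed fact

lemma integral_abs_square_le:
  fixes u :: "real \<Rightarrow> real"
  assumes T: "0 < T" and u: "u \<in> borel_measurable lborel" and u2: "integrable lborel (\<lambda>x. (u x)\<^sup>2)"
    and outside: "\<And>x. x \<notin> {0<..<T} \<Longrightarrow> u x = 0"
  shows "(\<integral>x. \<bar>u x\<bar> \<partial>lborel)\<^sup>2 \<le> T * (\<integral>x. (u x)\<^sup>2 \<partial>lborel)"
proof -
  have "integrable lborel u"
    using square_integrable_imp_integrable_Ioo[OF u u2 outside] .
  then have u1: "integrable lborel (\<lambda>x. \<bar>u x\<bar>)" by simp
  define A where "A = (\<integral>x. \<bar>u x\<bar> \<partial>lborel)"
  define B where "B = (\<integral>x. (u x)\<^sup>2 \<partial>lborel)"
  define c where "c = A / T"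
  have measure_Ioo: "measure lborel {0<..<T} = T"
    using measure_lborel_Ioo[of 0 T] T by simp
  \<comment> \<open>the variance of \<open>\<bar>u\<bar>\<close> on \<open>(0,T)\<close> is nonnegative\<close>
  have "0 \<le> (\<integral>x. indicator {0<..<T} x * (\<bar>u x\<bar> - c)\<^sup>2 \<partial>lborel)"
    by (rule integral_nonneg_AE) auto
  also have "\<dots> = (\<integral>x. (u x)\<^sup>2 - 2 * c * \<bar>u x\<bar> + c\<^sup>2 * indicator {0<..<T} x \<partial>lborel)"
    by (rule Bochner_Integration.integral_cong)
      (auto simp: indicator_def power2_eq_square outside algebra_simps)
  also have "\<dots> = B - 2 * c * A + c\<^sup>2 * T"
    using u1 u2 integrable_indicator_Ioo[of 0 T] measure_Ioo by (simp add: A_def B_def)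
  finally have "0 \<le> T * B - A\<^sup>2"
    using T unfolding c_def by (simp add: field_simps power2_eq_square)
  then show ?thesis unfolding A_def B_def by simp
qed

definition integrable_pair :: "(real \<Rightarrow> real) \<times> (real \<Rightarrow> real) \<Rightarrow> bool" where
  "integrable_pair P \<longleftrightarrow> integrable lborel (fst P) \<and> integrable lborel (snd P)"

definition pair_norm :: "(real \<Rightarrow> real) \<times> (real \<Rightarrow> real) \<Rightarrow> real \<Rightarrow> real" where
  "pair_norm P t = \<bar>fst P t\<bar> + \<bar>snd P t\<bar>"

definition pair_L1 :: "(real \<Rightarrow> real) \<times> (real \<Rightarrow> real) \<Rightarrow> real" where
  "pair_L1 P = (\<integral>t. pair_norm P t \<partial>lborel)"

lemma pair_norm_nonneg: "0 \<le> pair_norm P t"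
  by (simp add: pair_norm_def)

lemma pair_L1_nonneg: "0 \<le> pair_L1 P"
  unfolding pair_L1_def by (simp add: integral_nonneg_AE pair_norm_nonneg)

lemma integrable_pair_norm: "integrable_pair P \<Longrightarrow> integrable lborel (pair_norm P)"
  unfolding integrable_pair_def pair_norm_def[abs_def] by auto

lemma pair_norm_square_le: "(pair_norm P t)\<^sup>2 \<le> 2 * ((fst P t)\<^sup>2 + (snd P t)\<^sup>2)"
proof -
  have "2 * ((fst P t)\<^sup>2 + (snd P t)\<^sup>2) - (pair_norm P t)\<^sup>2 = (\<bar>fst P t\<bar> - \<bar>snd P t\<bar>)\<^sup>2"
    by (simp add: pair_norm_def power2_eq_square algebra_simps)
  then show ?thesis by (metis diff_ge_0_iff_ge zero_le_power2)
qed

lemma pair_L1_square_le: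
  assumes T: "0 < T" and m: "fst P \<in> borel_measurable lborel" "snd P \<in> borel_measurable lborel"
    and sq: "integrable lborel (\<lambda>t. (pair_norm P t)\<^sup>2)"
    and outside: "\<And>t. t \<notin> {0<..<T} \<Longrightarrow> pair_norm P t = 0"
  shows "(pair_L1 P)\<^sup>2 \<le> T * (\<integral>t. (pair_norm P t)\<^sup>2 \<partial>lborel)"
proof -
  have "pair_norm P \<in> borel_measurable lborel"
    using m unfolding pair_norm_def[abs_def] by measurable
  from integral_abs_square_le[OF T this sq outside] show ?thesis
    by (simp add: pair_L1_def pair_norm_nonneg)
qed

lemma pair_L1_square_le_L2:
  assumes T: "0 < T" and m: "fst P \<in> borel_measurable lborel" "snd P \<in> borel_measurable lborel"
    and sq: "integrable lborel (\<lambda>t. (fst P t)\<^sup>2)" "integrable lborel (\<lambda>t. (snd P t)\<^sup>2)"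
    and outside: "\<And>t. t \<notin> {0<..<T} \<Longrightarrow> fst P t = 0 \<and> snd P t = 0"
  shows "(pair_L1 P)\<^sup>2 \<le> 2 * T * (\<integral>t. (fst P t)\<^sup>2 + (snd P t)\<^sup>2 \<partial>lborel)"
proof -
  have sq2: "integrable lborel (\<lambda>t. 2 * ((fst P t)\<^sup>2 + (snd P t)\<^sup>2))"
    using sq by simp
  have "pair_norm P \<in> borel_measurable lborel"
    using m unfolding pair_norm_def[abs_def] by measurable
  then have N: "integrable lborel (\<lambda>t. (pair_norm P t)\<^sup>2)"
    using pair_norm_square_le[of P] by (intro Bochner_Integration.integrable_bound[OF sq2]) auto
  have "(pair_L1 P)\<^sup>2 \<le> T * (\<integral>t. (pair_norm P t)\<^sup>2 \<partial>lborel)"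
    using outside by (intro pair_L1_square_le[OF T m N]) (simp add: pair_norm_def)
  also have "\<dots> \<le> T * (\<integral>t. 2 * ((fst P t)\<^sup>2 + (snd P t)\<^sup>2) \<partial>lborel)"
    using T N sq2 pair_norm_square_le[of P] by (intro mult_left_mono integral_mono) auto
  also have "(\<integral>t. 2 * ((fst P t)\<^sup>2 + (snd P t)\<^sup>2) \<partial>lborel) = 2 * (\<integral>t. (fst P t)\<^sup>2 + (snd P t)\<^sup>2 \<partial>lborel)"
    by (rule integral_mult_right_zero)
  finally show ?thesis by (simp only: mult_ac)
qed

section \<open>Neumann series of a Volterra system\<close>

lemma integrable_indicator_mult_power:
  "integrable lborel (\<lambda>s::real. indicator {0..t::real} s * (c * s ^ n))"
  using borel_integrable_atLeastAtMost[of 0 t "\<lambda>x. c * x ^ n"] by (simp add: mult_ac)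

locale volterra_system =
  fixes T M :: real and k11 k12 k21 k22 :: "real \<Rightarrow> real \<Rightarrow> real"
  assumes T: "0 < T"
    and k11: "volterra_kernel T M k11" and k12: "volterra_kernel T M k12"
    and k21: "volterra_kernel T M k21" and k22: "volterra_kernel T M k22"
begin

definition K :: "(real \<Rightarrow> real) \<times> (real \<Rightarrow> real) \<Rightarrow> (real \<Rightarrow> real) \<times> (real \<Rightarrow> real)" where
  "K P = (volterra k11 k12 (fst P) (snd P), volterra k21 k22 (fst P) (snd P))"

lemma M_nonneg: "0 \<le> M"
  using volterra_kernel_nonneg_bound[OF k11] .

lemma integrable_pair_K: "integrable_pair P \<Longrightarrow> integrable_pair (K P)"
  unfolding integrable_pair_def K_def using integrable_volterra k11 k12 k21 k22 by simp

lemma integrable_pair_K_iterate: "integrable_pair P \<Longrightarrow> integrable_pair ((K ^^ n) P)"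
  by (induction n) (auto intro: integrable_pair_K)

lemma K_outside: "t \<notin> {0..T} \<Longrightarrow> fst (K P) t = 0 \<and> snd (K P) t = 0"
  unfolding K_def using volterra_outside k11 k12 k21 k22 by simp

lemma K_cong_AE:
  assumes "integrable_pair P" "integrable_pair Q"
    and "AE t in lborel. fst P t = fst Q t" "AE t in lborel. snd P t = snd Q t"
  shows "K P = K Q"
proof -
  have m: "fst P \<in> borel_measurable lborel" "snd P \<in> borel_measurable lborel"
    "fst Q \<in> borel_measurable lborel" "snd Q \<in> borel_measurable lborel"
    using assms(1,2) unfolding integrable_pair_def by auto
  show ?thesis
    using volterra_cong_AE[OF k11 k12 m assms(3,4)] volterra_cong_AE[OF k21 k22 m assms(3,4)]
    by (simp add: K_def fun_eq_iff)
qed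

lemma pair_norm_K_le:
  assumes "integrable_pair P"
  shows "pair_norm (K P) t \<le> 2 * M * (\<integral>s. indicator {0..t} s * pair_norm P s \<partial>lborel)"
  using abs_volterra_le[OF k11 k12, of "fst P" "snd P" t] abs_volterra_le[OF k21 k22, of "fst P" "snd P" t]
    assms
  unfolding K_def pair_norm_def integrable_pair_def by simp

lemma pair_norm_K_iterate_le:
  assumes P: "integrable_pair P" and t: "t \<in> {0..T}"
  shows "pair_norm ((K ^^ Suc n) P) t \<le> (2 * M) ^ Suc n * t ^ n / fact n * pair_L1 P"
  using t
proof (induction n arbitrary: t)
  case 0
  have "pair_norm (K P) t \<le> 2 * M * (\<integral>s. indicator {0..t} s * pair_norm P s \<partial>lborel)"
    by (rule pair_norm_K_le[OF P])
  also have "\<dots> \<le> 2 * M * pair_L1 P"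
    unfolding pair_L1_def using M_nonneg integrable_pair_norm[OF P]
    by (intro mult_left_mono integral_indicator_mult_le) (auto simp: pair_norm_nonneg)
  finally show ?case by simp
next
  case (Suc n)
  let ?c = "(2 * M) ^ Suc n / fact n * pair_L1 P"
  have "pair_norm (K ((K ^^ Suc n) P)) t
      \<le> 2 * M * (\<integral>s. indicator {0..t} s * pair_norm ((K ^^ Suc n) P) s \<partial>lborel)"
    by (rule pair_norm_K_le[OF integrable_pair_K_iterate[OF P]])
  also have "(\<integral>s. indicator {0..t} s * pair_norm ((K ^^ Suc n) P) s \<partial>lborel)
      \<le> (\<integral>s. indicator {0..t} s * (?c * s ^ n) \<partial>lborel)"
  proof (rule integral_mono'[OF integrable_indicator_mult_power])
    show "indicator {0..t} s * pair_norm ((K ^^ Suc n) P) s \<le> indicator {0..t} s * (?c * s ^ n)" for s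
      using Suc.IH[of s] Suc.prems by (cases "s \<in> {0..t}") (auto simp: ac_simps)
    show "0 \<le> indicator {0..t} s * (?c * s ^ n)" for s
      using M_nonneg pair_L1_nonneg by (auto simp: indicator_def)
  qed
  also have "(\<integral>s. indicator {0..t} s * (?c * s ^ n) \<partial>lborel) = ?c * (\<integral>s. s ^ n * indicator {0..t} s \<partial>lborel)"
    by (subst integral_mult_right_zero[symmetric]) (simp add: mult_ac)
  also have "(\<integral>s. s ^ n * indicator {0..t} s \<partial>lborel) = t ^ Suc n / Suc n"
    using integral_power[of 0 t n] Suc.prems by simp
  finally have "pair_norm (K ((K ^^ Suc n) P)) t \<le> 2 * M * (?c * (t ^ Suc n / Suc n))"
    using M_nonneg by (simp add: mult_left_mono)
  also have "\<dots> = (2 * M) ^ Suc (Suc n) * t ^ Suc n / fact (Suc n) * pair_L1 P"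
    by (simp add: field_simps)
  finally show ?case by simp
qed

definition iterate_bound :: "nat \<Rightarrow> real" where
  "iterate_bound n = (2 * M) ^ Suc n * T ^ n / fact n"

lemma iterate_bound_nonneg: "0 \<le> iterate_bound n"
  unfolding iterate_bound_def using M_nonneg T by simp

lemma summable_iterate_bound: "summable iterate_bound"
proof -
  have "summable (\<lambda>n. 2 * M * (inverse (fact n) * (2 * M * T) ^ n))"
    by (intro summable_mult summable_exp)
  then show ?thesis unfolding iterate_bound_def by (simp add: field_simps power_mult_distrib)
qed

lemma pair_norm_K_iterate_le_uniform:
  assumes "integrable_pair P"
  shows "pair_norm ((K ^^ Suc n) P) t \<le> iterate_bound n * pair_L1 P * indicator {0..T} t"
proof (cases "t \<in> {0..T}")
  case True
  have "pair_norm ((K ^^ Suc n) P) t \<le> (2 * M) ^ Suc n * t ^ n / fact n * pair_L1 P"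
    by (rule pair_norm_K_iterate_le[OF assms True])
  also have "\<dots> \<le> iterate_bound n * pair_L1 P" unfolding iterate_bound_def
    using True M_nonneg pair_L1_nonneg[of P]
    by (auto intro!: mult_right_mono divide_right_mono mult_left_mono power_mono)
  finally show ?thesis using True by simp
next
  case False
  then show ?thesis using K_outside[OF False] by (simp add: pair_norm_def)
qed

lemma K_fixed_point_eq_0:
  assumes P: "integrable_pair P" and fixed: "K P = P"
  shows "fst P t = 0 \<and> snd P t = 0"
proof -
  have "(K ^^ n) P = P" for n by (induction n) (simp_all add: fixed)
  then have le: "pair_norm P t \<le> iterate_bound n * pair_L1 P * indicator {0..T} t" for n
    using pair_norm_K_iterate_le_uniform[OF P, of n t] by metis
  have "(\<lambda>n. iterate_bound n * pair_L1 P * indicator {0..T} t) \<longlonglongrightarrow> 0 * pair_L1 P * indicator {0..T} t"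
    by (intro tendsto_mult_right summable_LIMSEQ_zero summable_iterate_bound)
  then have "pair_norm P t \<le> 0" using le by (simp add: LIMSEQ_le_const)
  then show ?thesis unfolding pair_norm_def by linarith
qed

definition neumann_tail :: "(real \<Rightarrow> real) \<times> (real \<Rightarrow> real) \<Rightarrow> (real \<Rightarrow> real) \<times> (real \<Rightarrow> real)" where
  "neumann_tail h = (\<lambda>t. \<Sum>n. fst ((K ^^ Suc n) h) t, \<lambda>t. \<Sum>n. snd ((K ^^ Suc n) h) t)"

definition neumann_sol :: "(real \<Rightarrow> real) \<times> (real \<Rightarrow> real) \<Rightarrow> (real \<Rightarrow> real) \<times> (real \<Rightarrow> real)" where
  "neumann_sol h = (\<lambda>t. fst h t + fst (neumann_tail h) t, \<lambda>t. snd h t + snd (neumann_tail h) t)"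

definition tail_bound :: real where
  "tail_bound = (\<Sum>n. iterate_bound n)"

lemma tail_bound_nonneg: "0 \<le> tail_bound"
  unfolding tail_bound_def using summable_iterate_bound iterate_bound_nonneg by (simp add: suminf_nonneg)

lemma summable_abs_K_iterate:
  assumes h: "integrable_pair h"
  shows "summable (\<lambda>n. \<bar>fst ((K ^^ Suc n) h) t\<bar>)" "summable (\<lambda>n. \<bar>snd ((K ^^ Suc n) h) t\<bar>)"
proof -
  let ?b = "\<lambda>n. iterate_bound n * (pair_L1 h * indicator {0..T} t)"
  have "summable ?b" by (intro summable_mult2 summable_iterate_bound)
  moreover have "\<bar>fst ((K ^^ Suc n) h) t\<bar> \<le> ?b n" "\<bar>snd ((K ^^ Suc n) h) t\<bar> \<le> ?b n" for n
    using pair_norm_K_iterate_le_uniform[OF h, of n t]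
    by (simp_all add: pair_norm_def mult.assoc)
  ultimately show "summable (\<lambda>n. \<bar>fst ((K ^^ Suc n) h) t\<bar>)" "summable (\<lambda>n. \<bar>snd ((K ^^ Suc n) h) t\<bar>)"
    by (auto intro: summable_comparison_test'[of ?b 0])
qed

lemma pair_norm_neumann_tail_le:
  assumes h: "integrable_pair h"
  shows "pair_norm (neumann_tail h) t \<le> tail_bound * pair_L1 h * indicator {0..T} t"
proof -
  note s = summable_abs_K_iterate[OF h, of t]
  have "pair_norm (neumann_tail h) t
      \<le> (\<Sum>n. \<bar>fst ((K ^^ Suc n) h) t\<bar>) + (\<Sum>n. \<bar>snd ((K ^^ Suc n) h) t\<bar>)"
    unfolding neumann_tail_def pair_norm_def using summable_rabs[OF s(1)] summable_rabs[OF s(2)] by simp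
  also have "\<dots> = (\<Sum>n. pair_norm ((K ^^ Suc n) h) t)"
    unfolding pair_norm_def using suminf_add[OF s] by simp
  also have "\<dots> \<le> (\<Sum>n. iterate_bound n * (pair_L1 h * indicator {0..T} t))"
    using pair_norm_K_iterate_le_uniform[OF h] summable_add[OF s]
    by (intro suminf_le summable_mult2 summable_iterate_bound) (simp_all add: pair_norm_def mult.assoc)
  also have "\<dots> = tail_bound * pair_L1 h * indicator {0..T} t"
    unfolding tail_bound_def
    using suminf_mult2[OF summable_iterate_bound, of "pair_L1 h * indicator {0..T} t"] by (metis mult.assoc)
  finally show ?thesis .
qed

lemma integrable_pair_neumann_tail:
  assumes h: "integrable_pair h"
  shows "integrable_pair (neumann_tail h)"
proof -
  let ?b = "\<lambda>t. tail_bound * pair_L1 h * indicator {0..T} t"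
  have b: "integrable lborel ?b"
    by (rule integrable_mult_right[OF integrable_indicator_Icc])
  have "fst ((K ^^ Suc n) h) \<in> borel_measurable lborel" "snd ((K ^^ Suc n) h) \<in> borel_measurable lborel" for n
    using integrable_pair_K_iterate[OF h, of "Suc n"] unfolding integrable_pair_def by auto
  then have m: "fst (neumann_tail h) \<in> borel_measurable lborel" "snd (neumann_tail h) \<in> borel_measurable lborel"
    unfolding neumann_tail_def by (auto intro!: borel_measurable_suminf)
  have "\<bar>fst (neumann_tail h) t\<bar> \<le> ?b t" "\<bar>snd (neumann_tail h) t\<bar> \<le> ?b t" for t
    using pair_norm_neumann_tail_le[OF h, of t] unfolding pair_norm_def by linarith+
  then show ?thesis
    unfolding integrable_pair_def
    using tail_bound_nonneg pair_L1_nonneg[of h]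
    by (auto intro!: Bochner_Integration.integrable_bound[OF b] m)
qed

lemma integrable_pair_neumann_sol: "integrable_pair h \<Longrightarrow> integrable_pair (neumann_sol h)"
  using integrable_pair_neumann_tail unfolding neumann_sol_def integrable_pair_def by auto

lemma volterra_neumann_tail:
  assumes h: "integrable_pair h" and k: "volterra_kernel T M k" and l: "volterra_kernel T M l"
  shows "volterra k l (fst (neumann_tail h)) (snd (neumann_tail h)) t
    = (\<Sum>n. volterra k l (fst ((K ^^ Suc n) h)) (snd ((K ^^ Suc n) h)) t)"
  unfolding neumann_tail_def fst_conv snd_conv
proof (rule volterra_suminf[OF k l])
  show "integrable lborel (fst ((K ^^ Suc n) h))" "integrable lborel (snd ((K ^^ Suc n) h))" for n
    using integrable_pair_K_iterate[OF h] unfolding integrable_pair_def by blast+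
  show "\<bar>fst ((K ^^ Suc n) h) s\<bar> + \<bar>snd ((K ^^ Suc n) h) s\<bar> \<le> iterate_bound n * pair_L1 h * indicator {0..T} s"
    for n s
    using pair_norm_K_iterate_le_uniform[OF h, of n s] by (simp add: pair_norm_def)
  show "0 \<le> iterate_bound n * pair_L1 h" for n
    using iterate_bound_nonneg pair_L1_nonneg by simp
  show "summable (\<lambda>n. iterate_bound n * pair_L1 h)"
    by (intro summable_mult2 summable_iterate_bound)
qed

lemma K_neumann_tail:
  assumes h: "integrable_pair h"
  shows "fst (K (neumann_sol h)) t = fst (neumann_tail h) t"
    "snd (K (neumann_sol h)) t = snd (neumann_tail h) t"
proof -
  have h': "integrable lborel (fst h)" "integrable lborel (snd h)"
    using h by (auto simp: integrable_pair_def)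
  note tail = integrable_pair_neumann_tail[OF h, unfolded integrable_pair_def]
  note s = summable_rabs_cancel[OF summable_abs_K_iterate(1)[OF h]]
    summable_rabs_cancel[OF summable_abs_K_iterate(2)[OF h]]
  have "fst (K (neumann_sol h)) t = fst (K h) t + (\<Sum>n. fst ((K ^^ Suc (Suc n)) h) t)"
    using volterra_lincomb[OF k11 k12 h' conjunct1[OF tail] conjunct2[OF tail], of 1 1 t]
    by (simp add: K_def neumann_sol_def volterra_neumann_tail[OF h k11 k12])
  also have "\<dots> = fst (neumann_tail h) t"
    using suminf_split_head[OF s(1)] by (simp add: neumann_tail_def)
  finally show "fst (K (neumann_sol h)) t = fst (neumann_tail h) t" .
  have "snd (K (neumann_sol h)) t = snd (K h) t + (\<Sum>n. snd ((K ^^ Suc (Suc n)) h) t)"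
    using volterra_lincomb[OF k21 k22 h' conjunct1[OF tail] conjunct2[OF tail], of 1 1 t]
    by (simp add: K_def neumann_sol_def volterra_neumann_tail[OF h k21 k22])
  also have "\<dots> = snd (neumann_tail h) t"
    using suminf_split_head[OF s(2)] by (simp add: neumann_tail_def)
  finally show "snd (K (neumann_sol h)) t = snd (neumann_tail h) t" .
qed

lemma neumann_sol_unique_AE:
  assumes P: "integrable_pair P" and h: "integrable_pair h"
    and eq: "AE t in lborel. fst P t = fst h t + fst (K P) t \<and> snd P t = snd h t + snd (K P) t"
  shows "AE t in lborel. fst P t = fst (neumann_sol h) t \<and> snd P t = snd (neumann_sol h) t"
proof -
  define D where "D = (\<lambda>t. fst P t - fst (neumann_sol h) t, \<lambda>t. snd P t - snd (neumann_sol h) t)"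
  have S: "integrable_pair (neumann_sol h)" using integrable_pair_neumann_sol[OF h] .
  have D: "integrable_pair D" using P S unfolding D_def integrable_pair_def by auto
  have KD: "fst (K D) t = fst (K P) t - fst (neumann_tail h) t" "snd (K D) t = snd (K P) t - snd (neumann_tail h) t"
    for t
    using P S volterra_lincomb[OF k11 k12, of "fst P" "snd P" "fst (neumann_sol h)" "snd (neumann_sol h)" 1 "-1" t]
      volterra_lincomb[OF k21 k22, of "fst P" "snd P" "fst (neumann_sol h)" "snd (neumann_sol h)" 1 "-1" t]
      K_neumann_tail[OF h, of t]
    by (simp_all add: D_def K_def integrable_pair_def)
  \<comment> \<open>\<open>D = K D\<close> holds only a.e., but \<open>K\<close> ignores null sets, so \<open>K D\<close> is an exact fixed point\<close>
  have homogeneous: "AE t in lborel. fst D t = fst (K D) t \<and> snd D t = snd (K D) t"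
    using eq by eventually_elim (simp only: KD, simp add: D_def neumann_sol_def)
  have "K (K D) = K D"
    by (rule K_cong_AE[OF integrable_pair_K[OF D] D]) (use homogeneous in \<open>auto elim: eventually_mono\<close>)
  then have KD0: "fst (K D) t = 0 \<and> snd (K D) t = 0" for t
    by (rule K_fixed_point_eq_0[OF integrable_pair_K[OF D]])
  show ?thesis using homogeneous by eventually_elim (simp only: KD0, simp add: D_def)
qed

lemma neumann_sol_square_le:
  assumes h: "integrable_pair h"
  shows "(fst (neumann_sol h) t)\<^sup>2 + (snd (neumann_sol h) t)\<^sup>2
    \<le> 2 * (pair_norm h t)\<^sup>2 + 2 * (tail_bound * pair_L1 h)\<^sup>2 * indicator {0..T} t"
proof -
  let ?S = "neumann_sol h" and ?N = "pair_norm h t" and ?d = "tail_bound * pair_L1 h * indicator {0..T} t"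
  have "(fst ?S t)\<^sup>2 + (snd ?S t)\<^sup>2 \<le> (pair_norm ?S t)\<^sup>2"
    by (simp add: pair_norm_def power2_eq_square algebra_simps abs_mult_self_eq)
  also have "pair_norm ?S t \<le> ?N + ?d"
    using pair_norm_neumann_tail_le[OF h, of t]
    unfolding neumann_sol_def pair_norm_def fst_conv snd_conv by linarith
  then have "(pair_norm ?S t)\<^sup>2 \<le> (?N + ?d)\<^sup>2"
    by (simp add: pair_norm_nonneg power_mono)
  also have "\<dots> \<le> 2 * ?N\<^sup>2 + 2 * ?d\<^sup>2"
    using zero_le_power2[of "?N - ?d"] by (simp add: power2_eq_square algebra_simps)
  also have "?d\<^sup>2 = (tail_bound * pair_L1 h)\<^sup>2 * indicator {0..T} t"
    by (simp add: indicator_def)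
  finally show ?thesis by simp
qed

lemma neumann_sol_L2_le:
  assumes h: "integrable_pair h" and sq: "integrable lborel (\<lambda>t. (pair_norm h t)\<^sup>2)"
    and outside: "\<And>t. t \<notin> {0<..<T} \<Longrightarrow> pair_norm h t = 0"
  shows "integrable lborel (\<lambda>t. (fst (neumann_sol h) t)\<^sup>2)"
    and "integrable lborel (\<lambda>t. (snd (neumann_sol h) t)\<^sup>2)"
    and "(\<integral>t. (fst (neumann_sol h) t)\<^sup>2 + (snd (neumann_sol h) t)\<^sup>2 \<partial>lborel)
      \<le> 2 * (1 + tail_bound\<^sup>2 * T\<^sup>2) * (\<integral>t. (pair_norm h t)\<^sup>2 \<partial>lborel)"
proof -
  let ?S = "neumann_sol h" and ?c = "tail_bound * pair_L1 h"
  let ?B = "\<lambda>t. 2 * (pair_norm h t)\<^sup>2 + 2 * ?c\<^sup>2 * indicator {0..T} t"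
  have B: "integrable lborel ?B"
    using sq integrable_indicator_Icc[of 0 T] by simp
  have m: "fst ?S \<in> borel_measurable lborel" "snd ?S \<in> borel_measurable lborel"
    using integrable_pair_neumann_sol[OF h] unfolding integrable_pair_def by auto
  have le: "(fst ?S t)\<^sup>2 \<le> ?B t" "(snd ?S t)\<^sup>2 \<le> ?B t" for t
    using neumann_sol_square_le[OF h, of t] zero_le_power2[of "fst ?S t"] zero_le_power2[of "snd ?S t"]
    by linarith+
  show S1: "integrable lborel (\<lambda>t. (fst ?S t)\<^sup>2)" and S2: "integrable lborel (\<lambda>t. (snd ?S t)\<^sup>2)"
    using le m by (auto intro!: Bochner_Integration.integrable_bound[OF B])
  have mh: "fst h \<in> borel_measurable lborel" "snd h \<in> borel_measurable lborel"
    using h unfolding integrable_pair_def by auto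
  have "(\<integral>t. (fst ?S t)\<^sup>2 + (snd ?S t)\<^sup>2 \<partial>lborel) \<le> (\<integral>t. ?B t \<partial>lborel)"
    using S1 S2 B neumann_sol_square_le[OF h] by (intro integral_mono) auto
  also have "\<dots> = 2 * (\<integral>t. (pair_norm h t)\<^sup>2 \<partial>lborel) + 2 * ?c\<^sup>2 * T"
    using sq integrable_indicator_Icc[of 0 T] T by simp
  also have "?c\<^sup>2 \<le> tail_bound\<^sup>2 * (T * (\<integral>t. (pair_norm h t)\<^sup>2 \<partial>lborel))"
    using pair_L1_square_le[OF T mh sq outside] by (simp add: power_mult_distrib mult_left_mono)
  finally show "(\<integral>t. (fst ?S t)\<^sup>2 + (snd ?S t)\<^sup>2 \<partial>lborel)
      \<le> 2 * (1 + tail_bound\<^sup>2 * T\<^sup>2) * (\<integral>t. (pair_norm h t)\<^sup>2 \<partial>lborel)"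
    using T by (simp add: power2_eq_square algebra_simps mult_right_mono)
qed

end

section \<open>Folding \<open>(-T,T)\<close> onto \<open>(0,T)\<close>\<close>

lemma integral_reflect_Ioo:
  fixes \<phi> :: "real \<Rightarrow> real"
  shows "(\<integral>x. indicator {0<..<T} x * \<phi> (T - x) \<partial>lborel) = (\<integral>x. indicator {0<..<T} x * \<phi> x \<partial>lborel)"
  using lborel_integral_real_affine[of "-1" "\<lambda>x. indicator {0<..<T} x * \<phi> (T - x)" T]
  by (simp add: indicator_def conj_commute)

lemma integral_shift_Ioo:
  fixes \<phi> :: "real \<Rightarrow> real"
  shows "(\<integral>x. indicator {-T<..<0} x * \<phi> (T + x) \<partial>lborel) = (\<integral>x. indicator {0<..<T} x * \<phi> x \<partial>lborel)"
  using lborel_integral_real_affine[of 1 "\<lambda>x. indicator {-T<..<0} x * \<phi> (T + x)" "-T"]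
  by (simp add: indicator_def conj_commute)

lemma integrable_reflect_Ioo_iff:
  fixes \<phi> :: "real \<Rightarrow> real"
  shows "integrable lborel (\<lambda>x. indicator {0<..<T} x * \<phi> (T - x))
    \<longleftrightarrow> integrable lborel (\<lambda>x. indicator {0<..<T} x * \<phi> x)"
  using lborel_integrable_real_affine_iff[of "-1" "\<lambda>x. indicator {0<..<T} x * \<phi> (T - x)" T]
  by (simp add: indicator_def conj_commute)

lemma integrable_shift_Ioo_iff:
  fixes \<phi> :: "real \<Rightarrow> real"
  shows "integrable lborel (\<lambda>x. indicator {-T<..<0} x * \<phi> (T + x))
    \<longleftrightarrow> integrable lborel (\<lambda>x. indicator {0<..<T} x * \<phi> x)"
  using lborel_integrable_real_affine_iff[of 1 "\<lambda>x. indicator {-T<..<0} x * \<phi> (T + x)" "-T"]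
  by (simp add: indicator_def conj_commute)

lemma indicator_mult_square: "(indicator S x * (y::real))\<^sup>2 = indicator S x * y\<^sup>2"
  by (simp add: indicator_def)

definition join_halves :: "real \<Rightarrow> (real \<Rightarrow> real) \<Rightarrow> (real \<Rightarrow> real) \<Rightarrow> real \<Rightarrow> real" where
  "join_halves T \<phi> \<psi> x = indicator {0<..<T} x * \<phi> (T - x) + indicator {-T<..<0} x * \<psi> (T + x)"

lemma join_halves_square_integral:
  fixes \<phi> \<psi> :: "real \<Rightarrow> real"
  assumes "integrable lborel (\<lambda>\<tau>. indicator {0<..<T} \<tau> * (\<phi> \<tau>)\<^sup>2)"
    and "integrable lborel (\<lambda>\<tau>. indicator {0<..<T} \<tau> * (\<psi> \<tau>)\<^sup>2)"
  shows "integrable lborel (\<lambda>x. (join_halves T \<phi> \<psi> x)\<^sup>2)"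
    and "(\<integral>x. (join_halves T \<phi> \<psi> x)\<^sup>2 \<partial>lborel) = (\<integral>\<tau>. indicator {0<..<T} \<tau> * ((\<phi> \<tau>)\<^sup>2 + (\<psi> \<tau>)\<^sup>2) \<partial>lborel)"
proof -
  have sq: "(join_halves T \<phi> \<psi> x)\<^sup>2
      = indicator {0<..<T} x * (\<phi> (T - x))\<^sup>2 + indicator {-T<..<0} x * (\<psi> (T + x))\<^sup>2" for x
    by (simp add: join_halves_def indicator_def)
  have i: "integrable lborel (\<lambda>x. indicator {0<..<T} x * (\<phi> (T - x))\<^sup>2)"
    "integrable lborel (\<lambda>x. indicator {-T<..<0} x * (\<psi> (T + x))\<^sup>2)"
    using assms integrable_reflect_Ioo_iff[of T "\<lambda>\<tau>. (\<phi> \<tau>)\<^sup>2"]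
      integrable_shift_Ioo_iff[of T "\<lambda>\<tau>. (\<psi> \<tau>)\<^sup>2"] by simp_all
  then show "integrable lborel (\<lambda>x. (join_halves T \<phi> \<psi> x)\<^sup>2)"
    unfolding sq by simp
  show "(\<integral>x. (join_halves T \<phi> \<psi> x)\<^sup>2 \<partial>lborel) = (\<integral>\<tau>. indicator {0<..<T} \<tau> * ((\<phi> \<tau>)\<^sup>2 + (\<psi> \<tau>)\<^sup>2) \<partial>lborel)"
    using i assms
    by (simp add: sq distrib_left integral_reflect_Ioo[of T "\<lambda>\<tau>. (\<phi> \<tau>)\<^sup>2"]
        integral_shift_Ioo[of T "\<lambda>\<tau>. (\<psi> \<tau>)\<^sup>2"])
qed

lemma fold_square_integral:
  fixes g :: "real \<Rightarrow> real"
  assumes g: "integrable lborel (\<lambda>x. (g x)\<^sup>2)"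
  shows "integrable lborel (\<lambda>\<tau>. indicator {0<..<T} \<tau> * ((g (T - \<tau>))\<^sup>2 + (g (\<tau> - T))\<^sup>2))"
    and "(\<integral>\<tau>. indicator {0<..<T} \<tau> * ((g (T - \<tau>))\<^sup>2 + (g (\<tau> - T))\<^sup>2) \<partial>lborel) \<le> (\<integral>x. (g x)\<^sup>2 \<partial>lborel)"
proof -
  let ?G = "\<lambda>x. (g x)\<^sup>2"
  have i: "integrable lborel (\<lambda>x. indicator {0<..<T} x * ?G x)"
    "integrable lborel (\<lambda>x. indicator {-T<..<0} x * ?G x)"
    using g by (simp_all add: integrable_indicator_mult)
  then have i': "integrable lborel (\<lambda>\<tau>. indicator {0<..<T} \<tau> * ?G (T - \<tau>))"
    "integrable lborel (\<lambda>\<tau>. indicator {0<..<T} \<tau> * ?G (\<tau> - T))"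
    using integrable_reflect_Ioo_iff[of T ?G] integrable_shift_Ioo_iff[of T "\<lambda>y. ?G (y - T)"] by simp_all
  then show "integrable lborel (\<lambda>\<tau>. indicator {0<..<T} \<tau> * ((g (T - \<tau>))\<^sup>2 + (g (\<tau> - T))\<^sup>2))"
    by (simp add: distrib_left)
  have "(\<integral>\<tau>. indicator {0<..<T} \<tau> * ((g (T - \<tau>))\<^sup>2 + (g (\<tau> - T))\<^sup>2) \<partial>lborel)
      = (\<integral>x. indicator {0<..<T} x * ?G x + indicator {-T<..<0} x * ?G x \<partial>lborel)"
    using i i' integral_reflect_Ioo[of T ?G] integral_shift_Ioo[of T "\<lambda>y. ?G (y - T)"]
    by (simp add: distrib_left)
  also have "\<dots> \<le> (\<integral>x. ?G x \<partial>lborel)"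
    using i g by (intro integral_mono) (auto simp: indicator_def)
  finally show "(\<integral>\<tau>. indicator {0<..<T} \<tau> * ((g (T - \<tau>))\<^sup>2 + (g (\<tau> - T))\<^sup>2) \<partial>lborel)
      \<le> (\<integral>x. (g x)\<^sup>2 \<partial>lborel)" .
qed

lemma join_halves_right: "0 < x \<Longrightarrow> x < T \<Longrightarrow> join_halves T \<phi> \<psi> x = \<phi> (T - x)"
  by (simp add: join_halves_def)

lemma join_halves_left: "-T < x \<Longrightarrow> x < 0 \<Longrightarrow> join_halves T \<phi> \<psi> x = \<psi> (T + x)"
  by (simp add: join_halves_def)

text \<open>The right-hand side of the Volterra system satisfied by a control steering the state to \<open>g\<close>:
  it is read off from the sum and the difference of \<open>g\<close> at the mirror points \<open>\<plusminus>(T - \<tau>)\<close>.\<close>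

definition system_data :: "real \<Rightarrow> (real \<Rightarrow> real) \<Rightarrow> (real \<Rightarrow> real) \<times> (real \<Rightarrow> real)" where
  "system_data T g = (\<lambda>\<tau>. indicator {0<..<T} \<tau> * (g (T - \<tau>) - g (\<tau> - T)),
                     \<lambda>\<tau>. indicator {0<..<T} \<tau> * (- g (T - \<tau>) - g (\<tau> - T)))"

lemma system_data_outside: "\<tau> \<notin> {0<..<T} \<Longrightarrow> pair_norm (system_data T g) \<tau> = 0"
  by (simp add: system_data_def pair_norm_def)

lemma system_data_L2:
  assumes m: "g \<in> borel_measurable lborel" and g: "integrable lborel (\<lambda>x. (g x)\<^sup>2)"
  shows "integrable_pair (system_data T g)"
    and "integrable lborel (\<lambda>\<tau>. (pair_norm (system_data T g) \<tau>)\<^sup>2)"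
    and "(\<integral>\<tau>. (pair_norm (system_data T g) \<tau>)\<^sup>2 \<partial>lborel) \<le> 4 * (\<integral>x. (g x)\<^sup>2 \<partial>lborel)"
proof -
  let ?h = "system_data T g"
  let ?u = "\<lambda>\<tau>. indicator {0<..<T} \<tau> * ((g (T - \<tau>))\<^sup>2 + (g (\<tau> - T))\<^sup>2)"
  note u = fold_square_integral[OF g, of T]
  have u2: "integrable lborel (\<lambda>\<tau>. 2 * ?u \<tau>)" using u(1) by simp
  have sum_sq: "(fst ?h \<tau>)\<^sup>2 + (snd ?h \<tau>)\<^sup>2 = 2 * ?u \<tau>" for \<tau>
    by (simp add: system_data_def indicator_def power2_eq_square algebra_simps)
  have mh [measurable]: "fst ?h \<in> borel_measurable lborel" "snd ?h \<in> borel_measurable lborel"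
    using m by (simp_all add: system_data_def)
  have "(fst ?h \<tau>)\<^sup>2 \<le> 2 * ?u \<tau>" "(snd ?h \<tau>)\<^sup>2 \<le> 2 * ?u \<tau>" for \<tau>
    using sum_sq[of \<tau>] zero_le_power2[of "fst ?h \<tau>"] zero_le_power2[of "snd ?h \<tau>"] by linarith+
  then have "integrable lborel (\<lambda>\<tau>. (fst ?h \<tau>)\<^sup>2)" "integrable lborel (\<lambda>\<tau>. (snd ?h \<tau>)\<^sup>2)"
    by (auto intro!: Bochner_Integration.integrable_bound[OF u2])
  moreover have "fst ?h \<tau> = 0" "snd ?h \<tau> = 0" if "\<tau> \<notin> {0<..<T}" for \<tau>
    using that by (simp_all add: system_data_def)
  ultimately show "integrable_pair ?h"
    unfolding integrable_pair_def using mh square_integrable_imp_integrable_Ioo by blast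
  have N_le: "(pair_norm ?h \<tau>)\<^sup>2 \<le> 4 * ?u \<tau>" for \<tau>
    using pair_norm_square_le[of ?h \<tau>] sum_sq[of \<tau>] by simp
  have u4: "integrable lborel (\<lambda>\<tau>. 4 * ?u \<tau>)" using u(1) by simp
  show N: "integrable lborel (\<lambda>\<tau>. (pair_norm ?h \<tau>)\<^sup>2)"
    using N_le unfolding pair_norm_def[abs_def]
    by (intro Bochner_Integration.integrable_bound[OF u4]) auto
  have "(\<integral>\<tau>. (pair_norm ?h \<tau>)\<^sup>2 \<partial>lborel) \<le> (\<integral>\<tau>. 4 * ?u \<tau> \<partial>lborel)"
    using N u4 N_le by (rule integral_mono)
  also have "\<dots> \<le> 4 * (\<integral>x. (g x)\<^sup>2 \<partial>lborel)" using u(2) by simp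
  finally show "(\<integral>\<tau>. (pair_norm ?h \<tau>)\<^sup>2 \<partial>lborel) \<le> 4 * (\<integral>x. (g x)\<^sup>2 \<partial>lborel)" .
qed

section \<open>Controls and kernels\<close>

definition cutoff :: "real \<Rightarrow> (real \<Rightarrow> real) \<Rightarrow> real \<Rightarrow> real" where
  "cutoff T f s = indicator {0<..<T} s * f s"

lemma cutoff_outside: "s \<notin> {0<..<T} \<Longrightarrow> cutoff T f s = 0"
  by (simp add: cutoff_def)

lemma sq_int_cutoff:
  assumes "sq_int {0<..<T} f"
  shows "cutoff T f \<in> borel_measurable lborel" "integrable lborel (\<lambda>s. (cutoff T f s)\<^sup>2)"
    "integrable lborel (cutoff T f)"
proof -
  show m: "cutoff T f \<in> borel_measurable lborel"
    using assms unfolding sq_int_def set_borel_measurable_def cutoff_def[abs_def] by simp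
  show sq: "integrable lborel (\<lambda>s. (cutoff T f s)\<^sup>2)"
    using assms unfolding sq_int_def set_integrable_def cutoff_def indicator_mult_square by simp
  show "integrable lborel (cutoff T f)"
    by (rule square_integrable_imp_integrable_Ioo[OF m sq cutoff_outside])
qed

lemma ctrl_space_cutoff:
  assumes "F \<in> ctrl_space T"
  shows "cutoff T (fst F) \<in> borel_measurable lborel" "integrable lborel (\<lambda>s. (cutoff T (fst F) s)\<^sup>2)"
    "integrable lborel (cutoff T (fst F))"
    "cutoff T (snd F) \<in> borel_measurable lborel" "integrable lborel (\<lambda>s. (cutoff T (snd F) s)\<^sup>2)"
    "integrable lborel (cutoff T (snd F))"
  using sq_int_cutoff[of T "fst F"] sq_int_cutoff[of T "snd F"] assms unfolding ctrl_space_def by auto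

lemma ctrl_norm_cutoff:
  "ctrl_norm T F = sqrt (\<integral>s. (cutoff T (fst F) s)\<^sup>2 + (cutoff T (snd F) s)\<^sup>2 \<partial>lborel)"
  unfolding ctrl_norm_def set_lebesgue_integral_def
  by (rule arg_cong[where f=sqrt], rule Bochner_Integration.integral_cong)
    (auto simp: cutoff_def indicator_def)

lemma l2_norm_indicator: "l2_norm S g = sqrt (\<integral>x. indicator S x * (g x)\<^sup>2 \<partial>lborel)"
  unfolding l2_norm_def set_lebesgue_integral_def by simp

lemma sq_int_iff_indicator:
  "sq_int S g \<longleftrightarrow> (\<lambda>x. indicator S x * g x) \<in> borel_measurable lborel
     \<and> integrable lborel (\<lambda>x. (indicator S x * g x)\<^sup>2)"
  unfolding sq_int_def set_borel_measurable_def set_integrable_def indicator_mult_square by simp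

lemma integral_cong_off_point:
  fixes f g :: "real \<Rightarrow> real"
  assumes g: "integrable lborel g" and fg: "\<And>x. x \<noteq> a \<Longrightarrow> f x = g x"
  shows "integral\<^sup>L lborel f = integral\<^sup>L lborel g"
proof -
  have f: "f = (\<lambda>x. g x + indicator {a} x * (f a - g a))"
    by (auto simp: fun_eq_iff indicator_def fg)
  have "integrable lborel (\<lambda>x. indicator {a} x * (f a - g a))"
    by (intro integrable_mult_left integrable_real_indicator) auto
  then show ?thesis
    by (subst f) (simp add: Bochner_Integration.integral_add[OF g] integral_mult_left_zero)
qed

lemma integral_reversed_eq_volterra:
  fixes v1 v2 f1 f2 :: "real \<Rightarrow> real"
  assumes t: "0 < t" "t < T"
    and k1: "\<And>s. k1 t s = indicator {0..t} s * v1 (T - s)"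
    and k2: "\<And>s. k2 t s = indicator {0..t} s * v2 (T - s)"
    and i: "integrable lborel (\<lambda>s. k1 t s * cutoff T f1 s + k2 t s * cutoff T f2 s)"
  shows "(LINT s:{T-t..T}|lborel. v1 s * f1 (T - s) + v2 s * f2 (T - s))
    = volterra k1 k2 (cutoff T f1) (cutoff T f2) t"
proof -
  have "(LINT s:{T-t..T}|lborel. v1 s * f1 (T - s) + v2 s * f2 (T - s))
      = (\<integral>s. indicator {T-t..T} (T - s) * (v1 (T - s) * f1 s + v2 (T - s) * f2 s) \<partial>lborel)"
    using lborel_integral_real_affine[of "-1"
        "\<lambda>s. indicator {T-t..T} s * (v1 s * f1 (T - s) + v2 s * f2 (T - s))" T]
    by (simp add: set_lebesgue_integral_def)
  also have "\<dots> = volterra k1 k2 (cutoff T f1) (cutoff T f2) t"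
    unfolding volterra_def
    \<comment> \<open>a pointwise argument, since \<open>v\<^sub>1, v\<^sub>2\<close> need not be measurable\<close>
  proof (rule integral_cong_off_point[OF i, of 0])
    fix s :: real assume "s \<noteq> 0"
    then show "indicator {T-t..T} (T - s) * (v1 (T - s) * f1 s + v2 (T - s) * f2 s) =
       k1 t s * cutoff T f1 s + k2 t s * cutoff T f2 s"
      using t by (auto simp: k1 k2 cutoff_def indicator_def)
  qed
  finally show ?thesis .
qed

definition triangle :: "real \<Rightarrow> (real \<times> real) set" where
  "triangle T = {z. 0 \<le> snd z \<and> snd z \<le> fst z \<and> fst z \<le> T}"

lemma compact_triangle: "compact (triangle T)"
proof -
  have "triangle T = ({0..T} \<times> {0..T}) \<inter> triangle T" by (auto simp: triangle_def)
  moreover have "closed (triangle T)"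
    unfolding triangle_def by (intro closed_Collect_conj closed_Collect_le continuous_intros)
  ultimately show ?thesis
    by (metis compact_Int_closed compact_Icc compact_Times)
qed

lemma volterra_kernel_continuous_on_triangle:
  assumes "continuous_on (triangle T) f"
  shows "\<exists>B. volterra_kernel T B (\<lambda>t s. indicator (triangle T) (t, s) * f (t, s))"
proof -
  obtain B where B: "0 < B" "\<And>z. z \<in> triangle T \<Longrightarrow> norm (f z) \<le> B"
    using compact_imp_bounded[OF compact_continuous_image[OF assms compact_triangle]]
    unfolding bounded_pos by auto
  have "(\<lambda>z. indicator (triangle T) z *\<^sub>R f z) \<in> borel_measurable borel"
    using compact_triangle
    by (intro borel_measurable_continuous_on_indicator[OF _ assms]) (simp add: borel_compact)
  moreover have "\<bar>indicator (triangle T) (t, s) * f (t, s)\<bar> \<le> B" for t s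
    using B by (cases "(t, s) \<in> triangle T") auto
  ultimately have "volterra_kernel T B (\<lambda>t s. indicator (triangle T) (t, s) * f (t, s))"
    unfolding volterra_kernel_def by (auto simp: triangle_def indicator_def)
  then show ?thesis ..
qed

lemma volterra_kernel_right_wedge:
  assumes "continuous_on {(x, t). 0 \<le> x \<and> x \<le> t} (\<lambda>(x, t). w x t)"
  shows "\<exists>B. volterra_kernel T B (\<lambda>t s. indicator (triangle T) (t, s) * w (T - t) (T - s))"
proof -
  have "continuous_on (triangle T) (\<lambda>z. (\<lambda>(x, t). w x t) (T - fst z, T - snd z))"
    by (rule continuous_on_compose2[OF assms]) (auto simp: triangle_def intro!: continuous_intros)
  from volterra_kernel_continuous_on_triangle[OF this] show ?thesis by simp
qed

lemma volterra_kernel_left_wedge: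
  assumes "continuous_on {(x, t). -t \<le> x \<and> x \<le> 0} (\<lambda>(x, t). w x t)"
  shows "\<exists>B. volterra_kernel T B (\<lambda>t s. indicator (triangle T) (t, s) * w (t - T) (T - s))"
proof -
  have "continuous_on (triangle T) (\<lambda>z. (\<lambda>(x, t). w x t) (fst z - T, T - snd z))"
    by (rule continuous_on_compose2[OF assms]) (auto simp: triangle_def intro!: continuous_intros)
  from volterra_kernel_continuous_on_triangle[OF this] show ?thesis by simp
qed

section \<open>The control operator of the transmission problem\<close>

locale transmission_control =
  fixes w1p w2p w1m w2m :: "real \<Rightarrow> real \<Rightarrow> real" and T :: real
  assumes cp1: "continuous_on {(x, t). 0 \<le> x \<and> x \<le> t} (\<lambda>(x, t). w1p x t)"
    and cp2: "continuous_on {(x, t). 0 \<le> x \<and> x \<le> t} (\<lambda>(x, t). w2p x t)"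
    and cm1: "continuous_on {(x, t). -t \<le> x \<and> x \<le> 0} (\<lambda>(x, t). w1m x t)"
    and cm2: "continuous_on {(x, t). -t \<le> x \<and> x \<le> 0} (\<lambda>(x, t). w2m x t)"
    and T: "0 < T"
begin

text \<open>In the variables \<open>\<tau> = T - \<bar>x\<bar>\<close> and \<open>\<sigma> = T - s\<close> the integral terms of the
  representation become Volterra operators on \<open>0 \<le> \<sigma> \<le> \<tau> \<le> T\<close> with these kernels.\<close>

definition kp1 :: "real \<Rightarrow> real \<Rightarrow> real" where
  "kp1 t s = indicator (triangle T) (t, s) * w1p (T - t) (T - s)"
definition kp2 :: "real \<Rightarrow> real \<Rightarrow> real" where
  "kp2 t s = indicator (triangle T) (t, s) * w2p (T - t) (T - s)"
definition km1 :: "real \<Rightarrow> real \<Rightarrow> real" where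
  "km1 t s = indicator (triangle T) (t, s) * w1m (t - T) (T - s)"
definition km2 :: "real \<Rightarrow> real \<Rightarrow> real" where
  "km2 t s = indicator (triangle T) (t, s) * w2m (t - T) (T - s)"

lemma kernels_bounded:
  "\<exists>B. volterra_kernel T B kp1 \<and> volterra_kernel T B kp2 \<and> volterra_kernel T B km1 \<and> volterra_kernel T B km2"
proof -
  obtain B1 B2 B3 B4 where B: "volterra_kernel T B1 kp1" "volterra_kernel T B2 kp2"
    "volterra_kernel T B3 km1" "volterra_kernel T B4 km2"
    using volterra_kernel_right_wedge[OF cp1] volterra_kernel_right_wedge[OF cp2]
      volterra_kernel_left_wedge[OF cm1] volterra_kernel_left_wedge[OF cm2]
    unfolding kp1_def[abs_def] kp2_def[abs_def] km1_def[abs_def] km2_def[abs_def] by blast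
  then have "0 \<le> B1" "0 \<le> B2" "0 \<le> B3" "0 \<le> B4"
    by (auto dest: volterra_kernel_nonneg_bound)
  then show ?thesis
    using B by (intro exI[of _ "B1 + B2 + B3 + B4"]) (auto elim: volterra_kernel_mono)
qed

definition kernel_bound :: real where
  "kernel_bound = (SOME B. volterra_kernel T B kp1 \<and> volterra_kernel T B kp2
     \<and> volterra_kernel T B km1 \<and> volterra_kernel T B km2)"

lemma kernels: "volterra_kernel T kernel_bound kp1" "volterra_kernel T kernel_bound kp2"
  "volterra_kernel T kernel_bound km1" "volterra_kernel T kernel_bound km2"
  using someI_ex[OF kernels_bounded] unfolding kernel_bound_def by blast+

lemma kernel_bound_nonneg: "0 \<le> kernel_bound"
  using volterra_kernel_nonneg_bound[OF kernels(1)] .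

sublocale V: volterra_system T "2 * kernel_bound"
  "\<lambda>t s. km1 t s - kp1 t s" "\<lambda>t s. km2 t s - kp2 t s" "\<lambda>t s. kp1 t s + km1 t s" "\<lambda>t s. kp2 t s + km2 t s"
proof
  show "0 < T" by (rule T)
  show "volterra_kernel T (2 * kernel_bound) (\<lambda>t s. km1 t s - kp1 t s)"
    "volterra_kernel T (2 * kernel_bound) (\<lambda>t s. km2 t s - kp2 t s)"
    using volterra_kernel_add_scaled[OF kernels(3) kernels(1), of "-1"]
      volterra_kernel_add_scaled[OF kernels(4) kernels(2), of "-1"] by simp_all
  show "volterra_kernel T (2 * kernel_bound) (\<lambda>t s. kp1 t s + km1 t s)"
    "volterra_kernel T (2 * kernel_bound) (\<lambda>t s. kp2 t s + km2 t s)"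
    using volterra_kernel_add_scaled[OF kernels(1) kernels(3), of 1]
      volterra_kernel_add_scaled[OF kernels(2) kernels(4), of 1] by simp_all
qed

lemma K_eq:
  assumes "integrable lborel p" "integrable lborel q"
  shows "fst (V.K (p, q)) t = volterra km1 km2 p q t - volterra kp1 kp2 p q t"
    "snd (V.K (p, q)) t = volterra kp1 kp2 p q t + volterra km1 km2 p q t"
  using volterra_add_scaled_kernels[OF kernels(3) kernels(1) kernels(4) kernels(2) assms, of "-1" t]
    volterra_add_scaled_kernels[OF kernels(1) kernels(3) kernels(2) kernels(4) assms, of 1 t]
  by (simp_all add: V.K_def)

text \<open>The state at \<open>x = T - \<tau>\<close> and at \<open>x = \<tau> - T\<close>, in terms of the truncated controls.\<close>

definition u_right :: "(real \<Rightarrow> real) \<Rightarrow> (real \<Rightarrow> real) \<Rightarrow> real \<Rightarrow> real" where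
  "u_right p q \<tau> = (1/2) * p \<tau> - (1/2) * q \<tau> + volterra kp1 kp2 p q \<tau>"

definition u_left :: "(real \<Rightarrow> real) \<Rightarrow> (real \<Rightarrow> real) \<Rightarrow> real \<Rightarrow> real" where
  "u_left p q \<tau> = -(1/2) * p \<tau> - (1/2) * q \<tau> + volterra km1 km2 p q \<tau>"

lemma borel_measurable_u_halves:
  assumes [measurable]: "p \<in> borel_measurable lborel" "q \<in> borel_measurable lborel"
  shows "u_right p q \<in> borel_measurable lborel" "u_left p q \<in> borel_measurable lborel"
  using borel_measurable_volterra[OF kernels(1,2)] borel_measurable_volterra[OF kernels(3,4)]
  unfolding u_right_def[abs_def] u_left_def[abs_def] by simp_all

lemma uF_right:
  assumes "integrable lborel (cutoff T (fst F))" "integrable lborel (cutoff T (snd F))"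
    and x: "0 < x" "x < T"
  shows "uF w1p w2p w1m w2m T F x = u_right (cutoff T (fst F)) (cutoff T (snd F)) (T - x)"
proof -
  have "(LINT s:{T - (T - x)..T}|lborel. w1p x s * fst F (T - s) + w2p x s * snd F (T - s))
      = volterra kp1 kp2 (cutoff T (fst F)) (cutoff T (snd F)) (T - x)"
  proof (rule integral_reversed_eq_volterra)
    show "integrable lborel (\<lambda>s. kp1 (T - x) s * cutoff T (fst F) s + kp2 (T - x) s * cutoff T (snd F) s)"
      using integrable_volterra_kernel_mult[OF kernels(1) assms(1)]
        integrable_volterra_kernel_mult[OF kernels(2) assms(2)] by simp
  qed (use x in \<open>auto simp: kp1_def kp2_def triangle_def indicator_def\<close>)
  then show ?thesis
    using x by (simp add: uF_def u_right_def cutoff_def)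
qed

lemma uF_left:
  assumes "integrable lborel (cutoff T (fst F))" "integrable lborel (cutoff T (snd F))"
    and x: "-T < x" "x < 0"
  shows "uF w1p w2p w1m w2m T F x = u_left (cutoff T (fst F)) (cutoff T (snd F)) (T + x)"
proof -
  have "(LINT s:{T - (T + x)..T}|lborel. w1m x s * fst F (T - s) + w2m x s * snd F (T - s))
      = volterra km1 km2 (cutoff T (fst F)) (cutoff T (snd F)) (T + x)"
  proof (rule integral_reversed_eq_volterra)
    show "integrable lborel (\<lambda>s. km1 (T + x) s * cutoff T (fst F) s + km2 (T + x) s * cutoff T (snd F) s)"
      using integrable_volterra_kernel_mult[OF kernels(3) assms(1)]
        integrable_volterra_kernel_mult[OF kernels(4) assms(2)] by simp
  qed (use x in \<open>auto simp: km1_def km2_def triangle_def indicator_def\<close>)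
  then show ?thesis
    using x by (simp add: uF_def u_left_def cutoff_def)
qed

lemma uF_eq_join_halves:
  assumes "integrable lborel (cutoff T (fst F))" "integrable lborel (cutoff T (snd F))"
  shows "indicator {-T<..<T} x * uF w1p w2p w1m w2m T F x
    = join_halves T (u_right (cutoff T (fst F)) (cutoff T (snd F))) (u_left (cutoff T (fst F)) (cutoff T (snd F))) x"
  using uF_right[OF assms, of x] uF_left[OF assms, of x]
  by (cases x "0 :: real" rule: linorder_cases) (auto simp: join_halves_def indicator_def uF_def)

lemma uF_lincomb_AE:
  assumes F: "F \<in> ctrl_space T" and G: "G \<in> ctrl_space T"
  shows "AE x in lborel. x \<in> {-T<..<T} \<longrightarrow>
    uF w1p w2p w1m w2m T (\<lambda>t. a * fst F t + b * fst G t, \<lambda>t. a * snd F t + b * snd G t) x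
      = a * uF w1p w2p w1m w2m T F x + b * uF w1p w2p w1m w2m T G x"
  using AE_lborel_singleton[of 0]
proof eventually_elim
  case (elim x)
  let ?H = "(\<lambda>t. a * fst F t + b * fst G t, \<lambda>t. a * snd F t + b * snd G t)"
  have i: "integrable lborel (cutoff T (fst F))" "integrable lborel (cutoff T (snd F))"
    "integrable lborel (cutoff T (fst G))" "integrable lborel (cutoff T (snd G))"
    using ctrl_space_cutoff[OF F] ctrl_space_cutoff[OF G] by auto
  have c: "cutoff T (fst ?H) = (\<lambda>s. a * cutoff T (fst F) s + b * cutoff T (fst G) s)"
    "cutoff T (snd ?H) = (\<lambda>s. a * cutoff T (snd F) s + b * cutoff T (snd G) s)"
    by (simp_all add: cutoff_def fun_eq_iff algebra_simps)
  have iH: "integrable lborel (cutoff T (fst ?H))" "integrable lborel (cutoff T (snd ?H))"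
    unfolding c using i by auto
  show ?case
  proof
    assume x: "x \<in> {-T<..<T}"
    show "uF w1p w2p w1m w2m T ?H x = a * uF w1p w2p w1m w2m T F x + b * uF w1p w2p w1m w2m T G x"
    proof (cases "0 < x")
      case True
      with x have xr: "0 < x" "x < T" by auto
      show ?thesis
        unfolding uF_right[OF iH xr] uF_right[OF i(1,2) xr] uF_right[OF i(3,4) xr]
          c u_right_def volterra_lincomb[OF kernels(1,2) i]
        by (simp add: algebra_simps)
    next
      case False
      with x elim have xl: "-T < x" "x < 0" by auto
      show ?thesis
        unfolding uF_left[OF iH xl] uF_left[OF i(1,2) xl] uF_left[OF i(3,4) xl]
          c u_left_def volterra_lincomb[OF kernels(3,4) i]
        by (simp add: algebra_simps)
    qed
  qed
qed

lemma abs_volterra_le_pair_L1: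
  assumes "volterra_kernel T kernel_bound k" "volterra_kernel T kernel_bound l"
    and "integrable lborel p" "integrable lborel q"
  shows "\<bar>volterra k l p q \<tau>\<bar> \<le> kernel_bound * pair_L1 (p, q)"
proof -
  have "0 \<le> kernel_bound * pair_L1 (p, q)"
    using kernel_bound_nonneg pair_L1_nonneg by simp
  moreover have "\<bar>volterra k l p q \<tau>\<bar> \<le> kernel_bound * pair_L1 (p, q) * indicator {0..T} \<tau>"
    using abs_volterra_le_L1[OF assms, of \<tau>] by (simp add: pair_L1_def pair_norm_def)
  ultimately show ?thesis by (cases "\<tau> \<in> {0..T}") auto
qed

lemma u_right_square_le:
  assumes "integrable lborel p" "integrable lborel q"
  shows "(u_right p q \<tau>)\<^sup>2 \<le> (p \<tau>)\<^sup>2 + (q \<tau>)\<^sup>2 + 2 * (kernel_bound * pair_L1 (p, q))\<^sup>2"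
proof -
  have "(u_right p q \<tau>)\<^sup>2 \<le> (p \<tau>)\<^sup>2 + (- q \<tau>)\<^sup>2 + 2 * (volterra kp1 kp2 p q \<tau>)\<^sup>2"
    using square_half_sum_add_le[of "p \<tau>" "- q \<tau>"] by (simp add: u_right_def diff_divide_distrib)
  then show ?thesis
    using abs_volterra_le_pair_L1[OF kernels(1,2) assms, of \<tau>] abs_le_square_iff
    by (smt (verit) abs_of_nonneg mult_nonneg_nonneg kernel_bound_nonneg pair_L1_nonneg power2_minus)
qed

lemma u_left_square_le:
  assumes "integrable lborel p" "integrable lborel q"
  shows "(u_left p q \<tau>)\<^sup>2 \<le> (p \<tau>)\<^sup>2 + (q \<tau>)\<^sup>2 + 2 * (kernel_bound * pair_L1 (p, q))\<^sup>2"
proof -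
  have "(u_left p q \<tau>)\<^sup>2 \<le> (- p \<tau>)\<^sup>2 + (- q \<tau>)\<^sup>2 + 2 * (volterra km1 km2 p q \<tau>)\<^sup>2"
    using square_half_sum_add_le[of "- p \<tau>" "- q \<tau>"] by (simp add: u_left_def diff_divide_distrib)
  then show ?thesis
    using abs_volterra_le_pair_L1[OF kernels(3,4) assms, of \<tau>] abs_le_square_iff
    by (smt (verit) abs_of_nonneg mult_nonneg_nonneg kernel_bound_nonneg pair_L1_nonneg power2_minus)
qed

lemma u_halves_L2_bound:
  assumes F: "F \<in> ctrl_space T"
  defines "p \<equiv> cutoff T (fst F)" and "q \<equiv> cutoff T (snd F)"
  shows "integrable lborel (\<lambda>\<tau>. indicator {0<..<T} \<tau> * (u_right p q \<tau>)\<^sup>2)"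
    and "integrable lborel (\<lambda>\<tau>. indicator {0<..<T} \<tau> * (u_left p q \<tau>)\<^sup>2)"
    and "(\<integral>\<tau>. indicator {0<..<T} \<tau> * ((u_right p q \<tau>)\<^sup>2 + (u_left p q \<tau>)\<^sup>2) \<partial>lborel)
      \<le> (2 + 8 * kernel_bound\<^sup>2 * T\<^sup>2) * (\<integral>s. (p s)\<^sup>2 + (q s)\<^sup>2 \<partial>lborel)"
proof -
  note pq = ctrl_space_cutoff[OF F, folded p_def q_def]
  note [measurable] = pq(1,4)
  let ?c = "kernel_bound * pair_L1 (p, q)"
  let ?b = "\<lambda>\<tau>. indicator {0<..<T} \<tau> * ((p \<tau>)\<^sup>2 + (q \<tau>)\<^sup>2 + 2 * ?c\<^sup>2)"
  have b: "integrable lborel ?b"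
    using pq(2,5) integrable_indicator_Ioo[of 0 T]
    by (simp add: distrib_left integrable_indicator_mult)
  note [measurable] = borel_measurable_u_halves[OF pq(1,4)]
  have le: "indicator {0<..<T} \<tau> * (u_right p q \<tau>)\<^sup>2 \<le> ?b \<tau>"
      "indicator {0<..<T} \<tau> * (u_left p q \<tau>)\<^sup>2 \<le> ?b \<tau>" for \<tau>
    using u_right_square_le[OF pq(3,6), of \<tau>] u_left_square_le[OF pq(3,6), of \<tau>]
    by (simp_all add: indicator_def)
  show i: "integrable lborel (\<lambda>\<tau>. indicator {0<..<T} \<tau> * (u_right p q \<tau>)\<^sup>2)"
      "integrable lborel (\<lambda>\<tau>. indicator {0<..<T} \<tau> * (u_left p q \<tau>)\<^sup>2)"
    using le by (auto intro!: Bochner_Integration.integrable_bound[OF b])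
  have "(\<integral>\<tau>. indicator {0<..<T} \<tau> * ((u_right p q \<tau>)\<^sup>2 + (u_left p q \<tau>)\<^sup>2) \<partial>lborel)
      \<le> (\<integral>\<tau>. 2 * ?b \<tau> \<partial>lborel)"
  proof (rule integral_mono)
    show "integrable lborel (\<lambda>\<tau>. indicator {0<..<T} \<tau> * ((u_right p q \<tau>)\<^sup>2 + (u_left p q \<tau>)\<^sup>2))"
      using i by (simp add: distrib_left)
    show "indicator {0<..<T} \<tau> * ((u_right p q \<tau>)\<^sup>2 + (u_left p q \<tau>)\<^sup>2) \<le> 2 * ?b \<tau>" for \<tau>
      using le[of \<tau>] distrib_left[of "indicator {0<..<T} \<tau>" "(u_right p q \<tau>)\<^sup>2" "(u_left p q \<tau>)\<^sup>2"]
      by linarith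
  qed (use b in simp)
  also have "\<dots> = 2 * (\<integral>s. (p s)\<^sup>2 + (q s)\<^sup>2 \<partial>lborel) + 4 * ?c\<^sup>2 * T"
  proof -
    have "?b \<tau> = ((p \<tau>)\<^sup>2 + (q \<tau>)\<^sup>2) + 2 * ?c\<^sup>2 * indicator {0<..<T} \<tau>" for \<tau>
      by (simp add: p_def q_def cutoff_def indicator_def)
    then show ?thesis
      using pq(2,5) integrable_indicator_Ioo[of 0 T] T by simp
  qed
  also have "?c\<^sup>2 \<le> kernel_bound\<^sup>2 * (2 * T * (\<integral>s. (p s)\<^sup>2 + (q s)\<^sup>2 \<partial>lborel))"
    using pair_L1_square_le_L2[of T "(p, q)"] pq T
    by (simp add: power_mult_distrib mult_left_mono cutoff_outside p_def q_def)
  finally show "(\<integral>\<tau>. indicator {0<..<T} \<tau> * ((u_right p q \<tau>)\<^sup>2 + (u_left p q \<tau>)\<^sup>2) \<partial>lborel)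
      \<le> (2 + 8 * kernel_bound\<^sup>2 * T\<^sup>2) * (\<integral>s. (p s)\<^sup>2 + (q s)\<^sup>2 \<partial>lborel)"
    using T by (simp add: power2_eq_square algebra_simps mult_right_mono)
qed

lemma uF_L2_bound:
  assumes F: "F \<in> ctrl_space T"
  defines "p \<equiv> cutoff T (fst F)" and "q \<equiv> cutoff T (snd F)"
  shows "sq_int {-T<..<T} (uF w1p w2p w1m w2m T F)"
    and "(\<integral>x. indicator {-T<..<T} x * (uF w1p w2p w1m w2m T F x)\<^sup>2 \<partial>lborel)
      \<le> (2 + 8 * kernel_bound\<^sup>2 * T\<^sup>2) * (\<integral>s. (p s)\<^sup>2 + (q s)\<^sup>2 \<partial>lborel)"
proof -
  note u = u_halves_L2_bound[OF F, folded p_def q_def]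
  note J = join_halves_square_integral[OF u(1,2)]
  have eq: "indicator {-T<..<T} x * uF w1p w2p w1m w2m T F x = join_halves T (u_right p q) (u_left p q) x" for x
    using uF_eq_join_halves ctrl_space_cutoff[OF F] by (simp add: p_def q_def)
  note [measurable] = borel_measurable_u_halves[OF ctrl_space_cutoff(1,4)[OF F, folded p_def q_def]]
  show "sq_int {-T<..<T} (uF w1p w2p w1m w2m T F)"
    unfolding sq_int_iff_indicator eq using J(1) by (simp add: join_halves_def[abs_def])
  show "(\<integral>x. indicator {-T<..<T} x * (uF w1p w2p w1m w2m T F x)\<^sup>2 \<partial>lborel)
      \<le> (2 + 8 * kernel_bound\<^sup>2 * T\<^sup>2) * (\<integral>s. (p s)\<^sup>2 + (q s)\<^sup>2 \<partial>lborel)"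
    unfolding indicator_mult_square[symmetric] eq J(2) by (rule u(3))
qed

lemma ctrl_solves_system:
  assumes F: "F \<in> ctrl_space T"
  defines "p \<equiv> cutoff T (fst F)" and "q \<equiv> cutoff T (snd F)"
    and "g \<equiv> \<lambda>x. indicator {-T<..<T} x * uF w1p w2p w1m w2m T F x"
  shows "AE \<tau> in lborel. p \<tau> = fst (system_data T g) \<tau> + fst (V.K (p, q)) \<tau>
    \<and> q \<tau> = snd (system_data T g) \<tau> + snd (V.K (p, q)) \<tau>"
  using AE_lborel_singleton[of 0] AE_lborel_singleton[of T]
proof eventually_elim
  case (elim \<tau>)
  have i: "integrable lborel p" "integrable lborel q"
    using ctrl_space_cutoff[OF F] by (simp_all add: p_def q_def)
  have g: "g x = join_halves T (u_right p q) (u_left p q) x" for x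
    unfolding g_def p_def q_def using uF_eq_join_halves ctrl_space_cutoff[OF F] by simp
  show ?case
  proof (cases "\<tau> \<in> {0<..<T}")
    case True
    then have "g (T - \<tau>) = u_right p q \<tau>" "g (\<tau> - T) = u_left p q \<tau>"
      by (simp_all add: g join_halves_right join_halves_left)
    with True show ?thesis
      by (simp add: system_data_def K_eq[OF i] u_right_def u_left_def)
  next
    case False
    with elim have "\<tau> \<notin> {0..T}" by auto
    with False show ?thesis
      using V.K_outside by (simp add: system_data_def p_def q_def cutoff_def)
  qed
qed

lemma ctrl_L2_bound:
  assumes F: "F \<in> ctrl_space T"
  shows "(\<integral>s. (cutoff T (fst F) s)\<^sup>2 + (cutoff T (snd F) s)\<^sup>2 \<partial>lborel)
    \<le> 8 * (1 + V.tail_bound\<^sup>2 * T\<^sup>2) * (\<integral>x. indicator {-T<..<T} x * (uF w1p w2p w1m w2m T F x)\<^sup>2 \<partial>lborel)"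
proof -
  define p q where "p = cutoff T (fst F)" and "q = cutoff T (snd F)"
  define g where "g = (\<lambda>x. indicator {-T<..<T} x * uF w1p w2p w1m w2m T F x)"
  define h where "h = system_data T g"
  have "g \<in> borel_measurable lborel" "integrable lborel (\<lambda>x. (g x)\<^sup>2)"
    using uF_L2_bound(1)[OF F] unfolding sq_int_iff_indicator g_def by auto
  note hs = system_data_L2[OF this, of T, folded h_def]
  note pq = ctrl_space_cutoff[OF F, folded p_def q_def]
  have "integrable_pair (p, q)" using pq by (simp add: integrable_pair_def)
  then have "AE s in lborel. fst (p, q) s = fst (V.neumann_sol h) s \<and> snd (p, q) s = snd (V.neumann_sol h) s"
    by (rule V.neumann_sol_unique_AE[OF _ hs(1)])
      (use ctrl_solves_system[OF F, folded p_def q_def g_def h_def] in simp)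
  moreover have [measurable]: "fst (V.neumann_sol h) \<in> borel_measurable lborel"
    "snd (V.neumann_sol h) \<in> borel_measurable lborel"
    using V.integrable_pair_neumann_sol[OF hs(1)] by (auto simp: integrable_pair_def)
  note [measurable] = pq(1,4)
  ultimately have "(\<integral>s. (p s)\<^sup>2 + (q s)\<^sup>2 \<partial>lborel)
      = (\<integral>s. (fst (V.neumann_sol h) s)\<^sup>2 + (snd (V.neumann_sol h) s)\<^sup>2 \<partial>lborel)"
    by (intro integral_cong_AE) (measurable, auto elim: eventually_mono)
  also have "\<dots> \<le> 2 * (1 + V.tail_bound\<^sup>2 * T\<^sup>2) * (\<integral>s. (pair_norm h s)\<^sup>2 \<partial>lborel)"
    using V.neumann_sol_L2_le(3)[OF hs(1,2)] system_data_outside by (simp add: h_def)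
  also have "\<dots> \<le> 2 * (1 + V.tail_bound\<^sup>2 * T\<^sup>2) * (4 * (\<integral>x. (g x)\<^sup>2 \<partial>lborel))"
    using hs(3) by (intro mult_left_mono) auto
  also have "(\<integral>x. (g x)\<^sup>2 \<partial>lborel) = (\<integral>x. indicator {-T<..<T} x * (uF w1p w2p w1m w2m T F x)\<^sup>2 \<partial>lborel)"
    by (simp add: g_def indicator_mult_square)
  finally show ?thesis
    by (simp add: p_def q_def algebra_simps)
qed

definition inverse_control :: "(real \<Rightarrow> real) \<Rightarrow> (real \<Rightarrow> real) \<times> (real \<Rightarrow> real)" where
  "inverse_control g = V.neumann_sol (system_data T (\<lambda>x. indicator {-T<..<T} x * g x))"

lemma inverse_control_in_ctrl_space:
  assumes g: "sq_int {-T<..<T} g"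
  shows "inverse_control g \<in> ctrl_space T"
    and "\<tau> \<notin> {0..T} \<Longrightarrow> fst (inverse_control g) \<tau> = 0 \<and> snd (inverse_control g) \<tau> = 0"
proof -
  define h where "h = system_data T (\<lambda>x. indicator {-T<..<T} x * g x)"
  note hs = system_data_L2[OF g[unfolded sq_int_iff_indicator, THEN conjunct1]
      g[unfolded sq_int_iff_indicator, THEN conjunct2], of T, folded h_def]
  let ?S = "inverse_control g"
  have S: "?S = V.neumann_sol h" by (simp add: inverse_control_def h_def)
  have m: "fst ?S \<in> borel_measurable lborel" "snd ?S \<in> borel_measurable lborel"
    using V.integrable_pair_neumann_sol[OF hs(1)] unfolding S integrable_pair_def by auto
  have "integrable lborel (\<lambda>t. (fst ?S t)\<^sup>2)" "integrable lborel (\<lambda>t. (snd ?S t)\<^sup>2)"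
    using V.neumann_sol_L2_le(1,2)[OF hs(1,2)] system_data_outside unfolding S h_def by auto
  then show "?S \<in> ctrl_space T"
    using m unfolding ctrl_space_def sq_int_def set_borel_measurable_def set_integrable_def
    by (auto intro: integrable_indicator_mult)
  assume \<tau>: "\<tau> \<notin> {0..T}"
  then have "pair_norm h \<tau> = 0" unfolding h_def by (intro system_data_outside) auto
  with \<tau> have "(fst ?S \<tau>)\<^sup>2 + (snd ?S \<tau>)\<^sup>2 \<le> 0"
    using V.neumann_sol_square_le[OF hs(1), of \<tau>] unfolding S by simp
  then show "fst ?S \<tau> = 0 \<and> snd ?S \<tau> = 0"
    by (smt (verit) zero_le_power2 power_eq_0_iff zero_neq_numeral)
qed

lemma u_halves_cutoff:
  assumes p: "integrable lborel p" and q: "integrable lborel q"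
    and outside: "\<And>s. s \<notin> {0..T} \<Longrightarrow> p s = 0 \<and> q s = 0" and \<tau>: "\<tau> \<in> {0<..<T}"
  shows "u_right (cutoff T p) (cutoff T q) \<tau> = u_right p q \<tau>"
    and "u_left (cutoff T p) (cutoff T q) \<tau> = u_left p q \<tau>"
proof -
  have "AE s in lborel. cutoff T p s = p s \<and> cutoff T q s = q s"
    using AE_lborel_singleton[of 0] AE_lborel_singleton[of T]
    by eventually_elim (use outside in \<open>force simp: cutoff_def\<close>)
  moreover have "integrable lborel (cutoff T p)" "integrable lborel (cutoff T q)"
    using p q unfolding cutoff_def[abs_def] by (simp_all add: integrable_indicator_mult)
  ultimately have V: "volterra k l (cutoff T p) (cutoff T q) \<tau> = volterra k l p q \<tau>"
    if "volterra_kernel T kernel_bound k" "volterra_kernel T kernel_bound l" for k l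
    using p q by (intro volterra_cong_AE[OF that]) (auto elim: eventually_mono)
  show "u_right (cutoff T p) (cutoff T q) \<tau> = u_right p q \<tau>"
    "u_left (cutoff T p) (cutoff T q) \<tau> = u_left p q \<tau>"
    using \<tau> by (simp_all add: u_right_def u_left_def V kernels cutoff_def)
qed

lemma uF_inverse_control:
  assumes g: "sq_int {-T<..<T} g"
  shows "AE x in lborel. x \<in> {-T<..<T} \<longrightarrow> uF w1p w2p w1m w2m T (inverse_control g) x = g x"
  using AE_lborel_singleton[of 0]
proof eventually_elim
  case (elim x)
  define G where "G = (\<lambda>x. indicator {-T<..<T} x * g x)"
  define h where "h = system_data T G"
  let ?S = "inverse_control g"
  have S: "?S = V.neumann_sol h" by (simp add: inverse_control_def h_def G_def)
  have hs: "integrable_pair h"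
    using system_data_L2(1) g unfolding sq_int_iff_indicator h_def G_def by blast
  have iS: "integrable lborel (fst ?S)" "integrable lborel (snd ?S)"
    using V.integrable_pair_neumann_sol[OF hs] unfolding S integrable_pair_def by auto
  have ic: "integrable lborel (cutoff T (fst ?S))" "integrable lborel (cutoff T (snd ?S))"
    using ctrl_space_cutoff[OF inverse_control_in_ctrl_space(1)[OF g]] by auto
  note cut = u_halves_cutoff[OF iS inverse_control_in_ctrl_space(2)[OF g]]
  have sys: "fst ?S \<tau> = fst h \<tau> + volterra km1 km2 (fst ?S) (snd ?S) \<tau> - volterra kp1 kp2 (fst ?S) (snd ?S) \<tau>"
      "snd ?S \<tau> = snd h \<tau> + volterra kp1 kp2 (fst ?S) (snd ?S) \<tau> + volterra km1 km2 (fst ?S) (snd ?S) \<tau>" for \<tau>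
    using V.K_neumann_tail[OF hs, of \<tau>] K_eq[OF iS, of \<tau>]
    unfolding S by (simp_all add: V.neumann_sol_def)
  show ?case
  proof
    assume x: "x \<in> {-T<..<T}"
    show "uF w1p w2p w1m w2m T ?S x = g x"
    proof (cases "0 < x")
      case True
      with x have "0 < x" "x < T" by auto
      then show ?thesis
        using uF_right[OF ic, of x] cut(1)[of "T - x"] sys[of "T - x"]
        by (simp add: u_right_def h_def G_def system_data_def x algebra_simps)
    next
      case False
      with x elim have "-T < x" "x < 0" by auto
      then show ?thesis
        using uF_left[OF ic, of x] cut(2)[of "T + x"] sys[of "T + x"]
        by (simp add: u_left_def h_def G_def system_data_def x algebra_simps)
    qed
  qed
qed

lemma l2_norm_uF_le:
  assumes F: "F \<in> ctrl_space T"
  shows "l2_norm {-T<..<T} (uF w1p w2p w1m w2m T F) \<le> sqrt (2 + 8 * kernel_bound\<^sup>2 * T\<^sup>2) * ctrl_norm T F"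
  using real_sqrt_le_mono[OF uF_L2_bound(2)[OF F]]
  by (simp add: l2_norm_indicator ctrl_norm_cutoff real_sqrt_mult)

lemma ctrl_norm_le_l2_norm_uF:
  assumes F: "F \<in> ctrl_space T"
  shows "ctrl_norm T F \<le> sqrt (8 * (1 + V.tail_bound\<^sup>2 * T\<^sup>2)) * l2_norm {-T<..<T} (uF w1p w2p w1m w2m T F)"
  using real_sqrt_le_mono[OF ctrl_L2_bound[OF F]]
  by (simp add: l2_norm_indicator ctrl_norm_cutoff real_sqrt_mult)

lemma uF_eq_0_imp_ctrl_eq_0:
  assumes F: "F \<in> ctrl_space T" and zero: "AE x in lborel. x \<in> {-T<..<T} \<longrightarrow> uF w1p w2p w1m w2m T F x = 0"
  shows "AE t in lborel. t \<in> {0<..<T} \<longrightarrow> fst F t = 0 \<and> snd F t = 0"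
proof -
  let ?Q = "\<lambda>s. (cutoff T (fst F) s)\<^sup>2 + (cutoff T (snd F) s)\<^sup>2"
  have "(\<integral>x. indicator {-T<..<T} x * (uF w1p w2p w1m w2m T F x)\<^sup>2 \<partial>lborel) = 0"
    using zero by (intro integral_eq_zero_AE) (auto elim: eventually_mono simp: indicator_def)
  then have "integral\<^sup>L lborel ?Q \<le> 0"
    using ctrl_L2_bound[OF F] by simp
  moreover have "0 \<le> integral\<^sup>L lborel ?Q"
    by (simp add: integral_nonneg_AE)
  moreover have "integrable lborel ?Q"
    using ctrl_space_cutoff[OF F] by simp
  ultimately have "AE s in lborel. ?Q s = 0"
    using integral_nonneg_eq_0_iff_AE[of lborel ?Q] by simp
  then show ?thesis
    by eventually_elim (auto simp: cutoff_def add_nonneg_eq_0_iff)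
qed

end

theorem mainTheorem3:
  fixes w1p w2p w1m w2m :: "real \<Rightarrow> real \<Rightarrow> real" and T :: real
  assumes cp1: "continuous_on {(x, t). 0 \<le> x \<and> x \<le> t} (\<lambda>(x, t). w1p x t)"
      and cp2: "continuous_on {(x, t). 0 \<le> x \<and> x \<le> t} (\<lambda>(x, t). w2p x t)"
      and cm1: "continuous_on {(x, t). -t \<le> x \<and> x \<le> 0} (\<lambda>(x, t). w1m x t)"
      and cm2: "continuous_on {(x, t). -t \<le> x \<and> x \<le> 0} (\<lambda>(x, t). w2m x t)"
      and T: "T > 0"
  defines "W \<equiv> uF w1p w2p w1m w2m T"
  shows
    \<comment> \<open>W^T maps F^T into L2(-T,T)\<close>
    "(\<forall>F \<in> ctrl_space T. sq_int {-T<..<T} (W F))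
     \<comment> \<open>linearity\<close>
     \<and> (\<forall>F \<in> ctrl_space T. \<forall>G \<in> ctrl_space T. \<forall>a b :: real.
          AE x in lborel. x \<in> {-T<..<T} \<longrightarrow>
            W (\<lambda>t. a * fst F t + b * fst G t, \<lambda>t. a * snd F t + b * snd G t) x
              = a * W F x + b * W G x)
     \<comment> \<open>boundedness\<close>
     \<and> (\<exists>C. \<forall>F \<in> ctrl_space T. l2_norm {-T<..<T} (W F) \<le> C * ctrl_norm T F)
     \<comment> \<open>injectivity (modulo null sets)\<close>
     \<and> (\<forall>F \<in> ctrl_space T. (AE x in lborel. x \<in> {-T<..<T} \<longrightarrow> W F x = 0) \<longrightarrow>
          (AE t in lborel. t \<in> {0<..<T} \<longrightarrow> fst F t = 0 \<and> snd F t = 0))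
     \<comment> \<open>surjectivity: the reachable set is all of L2(-T,T)\<close>
     \<and> (\<forall>g. sq_int {-T<..<T} g \<longrightarrow>
          (\<exists>F \<in> ctrl_space T. AE x in lborel. x \<in> {-T<..<T} \<longrightarrow> W F x = g x))
     \<comment> \<open>bounded inverse\<close>
     \<and> (\<exists>C. \<forall>F \<in> ctrl_space T. ctrl_norm T F \<le> C * l2_norm {-T<..<T} (W F))"
proof -
  interpret transmission_control w1p w2p w1m w2m T
    using assms by unfold_locales
  show ?thesis
    unfolding W_def
  proof (intro conjI ballI allI impI)
    show "\<exists>C. \<forall>F \<in> ctrl_space T. l2_norm {-T<..<T} (uF w1p w2p w1m w2m T F) \<le> C * ctrl_norm T F"
      using l2_norm_uF_le by blast
    show "\<exists>C. \<forall>F \<in> ctrl_space T. ctrl_norm T F \<le> C * l2_norm {-T<..<T} (uF w1p w2p w1m w2m T F)"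
      using ctrl_norm_le_l2_norm_uF by blast
    show "\<exists>F \<in> ctrl_space T. AE x in lborel. x \<in> {-T<..<T} \<longrightarrow> uF w1p w2p w1m w2m T F x = g x"
      if "sq_int {-T<..<T} g" for g
      using inverse_control_in_ctrl_space(1)[OF that] uF_inverse_control[OF that] by blast
  qed (assumption | rule uF_L2_bound(1) uF_lincomb_AE uF_eq_0_imp_ctrl_eq_0)+
qed

end
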